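(* Let $\rho$ be an $N\times N$ density matrix with eigenvalues $\lambda_1\ge\dots\ge\lambda_N$ (set $\lambda_j=0$ for $j>N$). Let $\{|i\rangle\}_{i=1}^N$ and $\{|a_i\rangle\}_{i=1}^N$ be two orthonormal bases of $\mathbb{C}^N$, let $U$ be the unitary matrix with entries $U_{ij}=\langle i|a_j\rangle$, and let $p_i=\langle i|\rho|i\rangle$, $q_i=\langle a_i|\rho|a_i\rangle$. Let $m,n$ be integers with $1\le n\le m\le N$. Then $$\sum_{i=1}^m p_i+\sum_{i=1}^n q_i\le\sum_{j=1}^{n}\lambda_j\,(1+s_{n+m-j})+\sum_{j=n+1}^{m}\lambda_j+\sum_{j=m+1}^{m+n}\lambda_j\,(1-s_{j-1}).$$
   Context: For $k=1,\dots,2N-1$, $s_k=\max\{\|M\| : M \text{ a submatrix of } U,\ \#\mathrm{rows}(M)+\#\mathrm{cols}(M)=k+1\}$, where $\|M\|$ denotes the operator norm (largest singular value). *)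

theory Defs
  imports "Jordan_Normal_Form.Schur_Decomposition" "Jordan_Normal_Form.DL_Submatrix"
begin

(* Dirac bracket <x|y> = sum_k conj(x_k) * y_k *)
definition braket :: "complex vec \<Rightarrow> complex vec \<Rightarrow> complex" where
  "braket x y = y \<bullet>c x"

definition vnorm :: "complex vec \<Rightarrow> real" where
  "vnorm v = sqrt (\<Sum>i<dim_vec v. (cmod (v $ i))^2)"

definition op_norm :: "complex mat \<Rightarrow> real" where
  "op_norm M = Sup {vnorm (M *\<^sub>v v) | v. v \<in> carrier_vec (dim_col M) \<and> vnorm v \<le> 1}"

definition s_val :: "nat \<Rightarrow> complex mat \<Rightarrow> nat \<Rightarrow> real" where
  "s_val N U k = Max {op_norm (submatrix U I J) | I J.
      I \<subseteq> {0..<N} \<and> J \<subseteq> {0..<N} \<and> card I + card J = k + 1}"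

definition mtrace :: "complex mat \<Rightarrow> complex" where
  "mtrace A = (\<Sum>i<dim_row A. A $$ (i, i))"

definition hermitian_mat :: "complex mat \<Rightarrow> bool" where
  "hermitian_mat A \<longleftrightarrow> mat_adjoint A = A"

definition density_mat :: "nat \<Rightarrow> complex mat \<Rightarrow> bool" where
  "density_mat N \<rho> \<longleftrightarrow> \<rho> \<in> carrier_mat N N \<and> hermitian_mat \<rho> \<and>
     (\<forall>v \<in> carrier_vec N. Re (braket v (\<rho> *\<^sub>v v)) \<ge> 0) \<and> mtrace \<rho> = 1"

definition orthonormal_basis :: "nat \<Rightarrow> (nat \<Rightarrow> complex vec) \<Rightarrow> bool" where
  "orthonormal_basis N e \<longleftrightarrow> (\<forall>i<N. e i \<in> carrier_vec N) \<and>
     (\<forall>i<N. \<forall>j<N. braket (e i) (e j) = (if i = j then 1 else 0))"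

end

(*
  Let A = P + Q, where P and Q are the orthogonal projections onto the span of the first m
  vectors of the basis |i> and of the first n vectors of the basis |a_i>. Expanding rho in an
  eigenbasis v_l gives sum p_i + sum q_i = tr (rho A) = sum_l lambda_l <v_l|A|v_l>.
  By the min-max principle the eigenvalues mu_1 >= ... >= mu_N of A satisfy mu_j <= 1 + s_{n+m-j}
  for j <= n, mu_j <= 1 for j > n and mu_j >= 1 - s_{j-1} for m < j <= m + n. The test vectors
  are orthogonal to |1>, ..., |j-1>, respectively lie in the span of |m+n-j+1>, ..., |m> and
  |a_1>, ..., |a_n>; on them the interaction of P and Q is bounded by the operator norm of the
  block of U with the rows of the remaining |i> and the first n columns. As tr A = m + n, the
  partial sums of the mu_j are bounded by those of the coefficients b_j on the right-hand side.
  Ky Fan's inequality bounds the partial sums of the diagonal entries <v_l|A|v_l> by those of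
  the mu_j, and Abel summation against the nonincreasing nonnegative lambda_l finishes the proof.
*)
theory Submission
  imports Defs
begin

section \<open>Finite sums and elementary inequalities\<close>

lemma sum_lessThan_add:
  fixes h :: "nat \<Rightarrow> 'a::comm_monoid_add"
  shows "(\<Sum>k<a + b. h k) = (\<Sum>k<a. h k) + (\<Sum>k<b. h (a + k))"
  by (induction b) (auto simp: add.assoc)

lemma sum_atLeastAtMost_shift:
  fixes f :: "nat \<Rightarrow> 'a::comm_monoid_add"
  shows "(\<Sum>j=a+1..a+b. f j) = (\<Sum>j<b. f (a + j + 1))"
proof (induction b)
  case (Suc b)
  have "{a + 1..a + Suc b} = insert (a + b + 1) {a + 1..a + b}"
    by auto
  then show ?case
    using Suc by (simp add: add.commute)
qed simp

lemma prod_atLeast1_atMost_eq_prod_list: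
  fixes f :: "nat \<Rightarrow> 'a::comm_monoid_mult"
  shows "(\<Prod>j=1..N. f j) = (\<Prod>j\<leftarrow>[0..<N]. f (j + 1))"
  by (induction N) (auto simp: atLeastAtMostSuc_conv mult.commute)

lemma prod_list_map_mset_cong:
  assumes "mset xs = mset ys"
  shows "(\<Prod>a\<leftarrow>xs. f a) = (\<Prod>a\<leftarrow>ys. (f a :: 'b :: comm_monoid_mult))"
  by (metis assms mset_map prod_mset_prod_list)

lemma Cauchy_Schwarz_real_sum_squared:
  fixes x y :: "'a \<Rightarrow> real"
  shows "(\<Sum>i\<in>S. x i * y i)\<^sup>2 \<le> (\<Sum>i\<in>S. (x i)\<^sup>2) * (\<Sum>i\<in>S. (y i)\<^sup>2)"
proof -
  have a: "(\<Sum>i\<in>S. \<Sum>j\<in>S. (x i)\<^sup>2 * (y j)\<^sup>2) = (\<Sum>i\<in>S. (x i)\<^sup>2) * (\<Sum>i\<in>S. (y i)\<^sup>2)"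
    by (simp add: sum_product)
  have b: "(\<Sum>i\<in>S. \<Sum>j\<in>S. (x j)\<^sup>2 * (y i)\<^sup>2) = (\<Sum>i\<in>S. (x i)\<^sup>2) * (\<Sum>i\<in>S. (y i)\<^sup>2)"
    by (subst sum.swap) (simp add: sum_product)
  have c: "(\<Sum>i\<in>S. \<Sum>j\<in>S. (x i * y i) * (x j * y j)) = (\<Sum>i\<in>S. x i * y i)\<^sup>2"
    by (simp add: sum_product power2_eq_square)
  have "(\<Sum>i\<in>S. \<Sum>j\<in>S. (x i * y j - x j * y i)\<^sup>2)
      = (\<Sum>i\<in>S. \<Sum>j\<in>S. (x i)\<^sup>2 * (y j)\<^sup>2 + (x j)\<^sup>2 * (y i)\<^sup>2 - 2 * ((x i * y i) * (x j * y j)))"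
    by (intro sum.cong refl) (simp add: power2_eq_square algebra_simps)
  also have "\<dots> = (\<Sum>i\<in>S. \<Sum>j\<in>S. (x i)\<^sup>2 * (y j)\<^sup>2) + (\<Sum>i\<in>S. \<Sum>j\<in>S. (x j)\<^sup>2 * (y i)\<^sup>2)
      - 2 * (\<Sum>i\<in>S. \<Sum>j\<in>S. (x i * y i) * (x j * y j))"
    by (simp only: sum.distrib sum_subtractf sum_distrib_left)
  finally have "(\<Sum>i\<in>S. \<Sum>j\<in>S. (x i * y j - x j * y i)\<^sup>2)
      = 2 * ((\<Sum>i\<in>S. (x i)\<^sup>2) * (\<Sum>i\<in>S. (y i)\<^sup>2)) - 2 * (\<Sum>i\<in>S. x i * y i)\<^sup>2"
    unfolding a b c by simp
  moreover have "(\<Sum>i\<in>S. \<Sum>j\<in>S. (x i * y j - x j * y i)\<^sup>2) \<ge> 0"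
    by (intro sum_nonneg) auto
  ultimately show ?thesis
    by simp
qed

lemma Cauchy_Schwarz_complex_sum:
  fixes x y :: "'a \<Rightarrow> complex"
  shows "cmod (\<Sum>i\<in>S. cnj (x i) * y i)
    \<le> sqrt (\<Sum>i\<in>S. (cmod (x i))\<^sup>2) * sqrt (\<Sum>i\<in>S. (cmod (y i))\<^sup>2)"
proof -
  have "cmod (\<Sum>i\<in>S. cnj (x i) * y i) \<le> (\<Sum>i\<in>S. cmod (x i) * cmod (y i))"
    using norm_sum[of "\<lambda>i. cnj (x i) * y i" S] by (simp add: norm_mult)
  also have "\<dots> \<le> sqrt ((\<Sum>i\<in>S. cmod (x i) * cmod (y i))\<^sup>2)"
    by simp
  also have "\<dots> \<le> sqrt (\<Sum>i\<in>S. (cmod (x i))\<^sup>2) * sqrt (\<Sum>i\<in>S. (cmod (y i))\<^sup>2)"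
    unfolding real_sqrt_mult[symmetric]
    by (rule real_sqrt_le_mono[OF Cauchy_Schwarz_real_sum_squared])
  finally show ?thesis .
qed

lemma Cauchy_Schwarz_real_two:
  fixes a b c d :: real
  shows "a * c + b * d \<le> sqrt (a\<^sup>2 + b\<^sup>2) * sqrt (c\<^sup>2 + d\<^sup>2)"
proof -
  have "(a * c + b * d)\<^sup>2 \<le> (a\<^sup>2 + b\<^sup>2) * (c\<^sup>2 + d\<^sup>2)"
    using zero_le_power2[of "a * d - b * c"] by (simp add: power2_eq_square algebra_simps)
  then show ?thesis
    by (metis real_le_rsqrt real_sqrt_mult)
qed

lemma two_mult_sqrt_le:
  fixes a b :: real
  assumes "a \<ge> 0" "b \<ge> 0"
  shows "2 * (sqrt a * sqrt b) \<le> a + b"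
  using zero_le_power2[of "sqrt a - sqrt b"] assms by (simp add: power2_eq_square algebra_simps)

lemma le_mult_sq_of_le_mult:
  fixes T u v s :: real
  assumes "0 \<le> T" "0 \<le> u" "0 \<le> s" "T \<le> u * v" "v\<^sup>2 \<le> (1 + s) * T"
  shows "T \<le> (1 + s) * u\<^sup>2"
proof (cases "T = 0")
  case False
  have "T * T \<le> (u * v) * (u * v)"
    using assms by (intro mult_mono) auto
  also have "\<dots> = u\<^sup>2 * v\<^sup>2"
    by (simp add: power2_eq_square)
  also have "\<dots> \<le> u\<^sup>2 * ((1 + s) * T)"
    using assms(5) by (rule mult_left_mono) simp
  also have "\<dots> = ((1 + s) * u\<^sup>2) * T"
    by (simp add: algebra_simps)
  finally show ?thesis
    using False assms(1) by simp
qed (use assms in simp)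

lemma mult_le_of_le_sqrt_mult:
  fixes T X P s :: real
  assumes "0 < X" "s < 1" "0 \<le> T" "0 \<le> P" "X \<le> sqrt P * sqrt T" "(1 - s) * T \<le> X"
  shows "(1 - s) * X \<le> P"
proof -
  have "X * X \<le> (sqrt P * sqrt T) * (sqrt P * sqrt T)"
    using assms by (intro mult_mono) auto
  also have "\<dots> = P * T"
    using assms by (simp add: algebra_simps)
  finally have "(1 - s) * (X * X) \<le> P * ((1 - s) * T)"
    using assms by (simp add: mult_left_mono mult.left_commute)
  also have "\<dots> \<le> P * X"
    using assms by (intro mult_left_mono) auto
  finally show ?thesis
    using assms by (simp add: mult.assoc mult.commute)
qed

lemma weighted_sum_le_top_sum:
  fixes \<mu> y :: "nat \<Rightarrow> real"
  assumes sorted: "\<And>i j. i \<le> j \<Longrightarrow> j < N \<Longrightarrow> \<mu> j \<le> \<mu> i"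
    and y: "\<And>j. j < N \<Longrightarrow> 0 \<le> y j" "\<And>j. j < N \<Longrightarrow> y j \<le> 1"
    and sum_y: "(\<Sum>j<N. y j) = real k" and k: "k \<le> N"
  shows "(\<Sum>j<N. \<mu> j * y j) \<le> (\<Sum>j<k. \<mu> j)"
proof (cases "k = 0")
  case True
  then have "\<forall>j\<in>{..<N}. y j = 0"
    using sum_y y(1) by (subst sum_nonneg_eq_0_iff[symmetric]) auto
  then show ?thesis
    using True by simp
next
  case False
  define c where "c = \<mu> (k - 1)"
  obtain r where r: "N = k + r"
    using k le_Suc_ex by blast
  have "(\<Sum>j<k. \<mu> j * (y j - 1)) \<le> (\<Sum>j<k. c * (y j - 1))"
    using sorted[of _ "k - 1"] y(2) k False
    by (intro sum_mono mult_right_mono_neg) (auto simp: c_def)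
  moreover have "(\<Sum>j<r. \<mu> (k + j) * y (k + j)) \<le> (\<Sum>j<r. c * y (k + j))"
    using sorted[of "k - 1"] y(1) r False
    by (intro sum_mono mult_right_mono) (auto simp: c_def)
  moreover have "(\<Sum>j<N. \<mu> j * y j) - (\<Sum>j<k. \<mu> j)
      = (\<Sum>j<k. \<mu> j * (y j - 1)) + (\<Sum>j<r. \<mu> (k + j) * y (k + j))"
    unfolding r sum_lessThan_add by (simp add: algebra_simps sum_subtractf)
  moreover have "(\<Sum>j<k. c * (y j - 1)) + (\<Sum>j<r. c * y (k + j)) = c * ((\<Sum>j<N. y j) - real k)"
    unfolding r sum_lessThan_add by (simp add: algebra_simps sum_subtractf sum_distrib_left)
  ultimately show ?thesis
    using sum_y by simp
qed

lemma weighted_sum_nonneg_of_partial_sums: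
  fixes a d :: "nat \<Rightarrow> real"
  assumes "\<And>i j. i \<le> j \<Longrightarrow> j < N \<Longrightarrow> a j \<le> a i" "\<And>j. j < N \<Longrightarrow> 0 \<le> a j"
    and "\<And>k. k \<le> N \<Longrightarrow> 0 \<le> (\<Sum>j<k. d j)"
  shows "0 \<le> (\<Sum>j<N. a j * d j)"
  using assms
proof (induction N arbitrary: a)
  case (Suc N)
  have "0 \<le> (\<Sum>j<N. (a j - a N) * d j)"
    by (rule Suc.IH) (use Suc.prems in auto)
  moreover have "0 \<le> a N * (\<Sum>j<Suc N. d j)"
    using Suc.prems(2)[of N] Suc.prems(3)[of "Suc N"] by simp
  ultimately show ?case
    by (simp add: algebra_simps sum_subtractf sum_distrib_left)
qed simp

section \<open>Inner products, linear combinations and orthonormal bases\<close>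

lemma braket_eq_sum: "x \<in> carrier_vec N \<Longrightarrow> braket x y = (\<Sum>i<N. cnj (x $ i) * y $ i)"
  unfolding braket_def scalar_prod_def by (auto simp: lessThan_atLeast0 mult.commute)

lemma cnj_braket:
  assumes "x \<in> carrier_vec N" "y \<in> carrier_vec N"
  shows "cnj (braket x y) = braket y x"
  using assms by (simp add: braket_eq_sum mult.commute)

lemma cmod_braket_commute:
  assumes "x \<in> carrier_vec N" "y \<in> carrier_vec N"
  shows "cmod (braket x y) = cmod (braket y x)"
  by (metis assms cnj_braket complex_mod_cnj)

lemma braket_smult_right:
  assumes "x \<in> carrier_vec N" "y \<in> carrier_vec N"
  shows "braket x (k \<cdot>\<^sub>v y) = k * braket x y"
  using assms by (simp add: braket_eq_sum sum_distrib_left mult_ac)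

lemma braket_smult_left:
  assumes "x \<in> carrier_vec N" "y \<in> carrier_vec N"
  shows "braket (k \<cdot>\<^sub>v x) y = cnj k * braket x y"
  using assms by (simp add: braket_eq_sum[of _ N] sum_distrib_left mult_ac)

lemma braket_add_right:
  assumes "x \<in> carrier_vec N" "y \<in> carrier_vec N" "z \<in> carrier_vec N"
  shows "braket x (y + z) = braket x y + braket x z"
  using assms by (simp add: braket_eq_sum sum.distrib algebra_simps)

lemma braket_add_left:
  assumes "x \<in> carrier_vec N" "y \<in> carrier_vec N" "z \<in> carrier_vec N"
  shows "braket (y + z) x = braket y x + braket z x"
  using assms by (simp add: braket_eq_sum[of _ N] sum.distrib algebra_simps)

lemma vnorm_nonneg: "vnorm v \<ge> 0"
  unfolding vnorm_def by (simp add: sum_nonneg)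

lemma vnorm_square: "v \<in> carrier_vec N \<Longrightarrow> (vnorm v)\<^sup>2 = (\<Sum>i<N. (cmod (v $ i))\<^sup>2)"
  unfolding vnorm_def by (simp add: sum_nonneg)

lemma braket_self: "x \<in> carrier_vec N \<Longrightarrow> braket x x = of_real ((vnorm x)\<^sup>2)"
  by (simp add: braket_eq_sum vnorm_square[of x N] complex_norm_square mult.commute
      del: of_real_power)

lemma vnorm_eq_0_iff:
  assumes "x \<in> carrier_vec N"
  shows "vnorm x = 0 \<longleftrightarrow> x = 0\<^sub>v N"
proof
  assume "vnorm x = 0"
  then have "\<forall>i\<in>{..<N}. (cmod (x $ i))\<^sup>2 = 0"
    using vnorm_square[OF assms] by (subst sum_nonneg_eq_0_iff[symmetric]) auto
  then show "x = 0\<^sub>v N"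
    using assms by auto
qed (simp add: vnorm_def)

lemma vnorm_smult:
  assumes "v \<in> carrier_vec N"
  shows "vnorm (k \<cdot>\<^sub>v v) = cmod k * vnorm v"
proof -
  have "(vnorm (k \<cdot>\<^sub>v v))\<^sup>2 = (cmod k * vnorm v)\<^sup>2"
    using assms by (simp add: vnorm_square[of _ N] norm_mult power_mult_distrib sum_distrib_left)
  then show ?thesis
    using vnorm_nonneg by simp
qed

lemma vnorm_unit_vec:
  assumes "j < N"
  shows "vnorm (unit_vec N j :: complex vec) = 1"
proof -
  have "(\<Sum>i<N. (cmod (unit_vec N j $ i :: complex))\<^sup>2) = (\<Sum>i<N. if i = j then 1 else 0)"
    by (intro sum.cong) (auto simp: unit_vec_def)
  then show ?thesis
    using assms by (simp add: vnorm_def)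
qed

lemma cmod_braket_le:
  assumes "x \<in> carrier_vec N" "y \<in> carrier_vec N"
  shows "cmod (braket x y) \<le> vnorm x * vnorm y"
  using Cauchy_Schwarz_complex_sum[of "\<lambda>i. x $ i" "\<lambda>i. y $ i" "{..<N}"] assms
  by (simp add: braket_eq_sum vnorm_def)

lemma mult_mat_vec_eq_sum:
  assumes "M \<in> carrier_mat N K" "x \<in> carrier_vec K" "i < N"
  shows "(M *\<^sub>v x) $ i = (\<Sum>j<K. M $$ (i, j) * x $ j)"
  using assms by (simp add: scalar_prod_def lessThan_atLeast0)

lemma braket_mult_mat_vec_eq_sum:
  assumes "M \<in> carrier_mat N N" "x \<in> carrier_vec N" "y \<in> carrier_vec N"
  shows "braket x (M *\<^sub>v y) = (\<Sum>i<N. \<Sum>j<N. cnj (x $ i) * M $$ (i, j) * y $ j)"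
  using assms mult_mat_vec_eq_sum[OF assms(1,3)]
  by (simp add: braket_eq_sum sum_distrib_left mult.assoc)

lemma hermitian_mat_entry:
  assumes "hermitian_mat M" "M \<in> carrier_mat N N" "i < N" "j < N"
  shows "M $$ (i, j) = cnj (M $$ (j, i))"
proof -
  have "M $$ (i, j) = mat_adjoint M $$ (i, j)"
    using assms(1) unfolding hermitian_mat_def by simp
  also have "\<dots> = cnj (M $$ (j, i))"
    using assms(2-4) unfolding mat_adjoint_def by (simp add: mat_of_rows_index)
  finally show ?thesis .
qed

lemma hermitian_matI:
  assumes M: "M \<in> carrier_mat N N"
    and entry: "\<And>i j. i < N \<Longrightarrow> j < N \<Longrightarrow> M $$ (i, j) = cnj (M $$ (j, i))"
  shows "hermitian_mat M"
  unfolding hermitian_mat_def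
proof (rule eq_matI)
  fix i j assume "i < dim_row M" "j < dim_col M"
  then show "mat_adjoint M $$ (i, j) = M $$ (i, j)"
    using M entry[of i j] unfolding mat_adjoint_def by (simp add: mat_of_rows_index)
qed (use M in \<open>simp_all add: mat_adjoint_def\<close>)

lemma cnj_braket_hermitian:
  assumes "hermitian_mat M" "M \<in> carrier_mat N N" "x \<in> carrier_vec N" "y \<in> carrier_vec N"
  shows "cnj (braket x (M *\<^sub>v y)) = braket y (M *\<^sub>v x)"
proof -
  have "cnj (braket x (M *\<^sub>v y)) = (\<Sum>i<N. \<Sum>j<N. x $ i * cnj (M $$ (i, j)) * cnj (y $ j))"
    unfolding braket_mult_mat_vec_eq_sum[OF assms(2-4)] cnj_sum by simp
  also have "\<dots> = (\<Sum>j<N. \<Sum>i<N. cnj (y $ j) * M $$ (j, i) * x $ i)"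
  proof (subst sum.swap, intro sum.cong refl)
    fix i j assume "j \<in> {..<N}" "i \<in> {..<N}"
    then have "cnj (M $$ (i, j)) = M $$ (j, i)"
      using hermitian_mat_entry[OF assms(1,2), of j i] by simp
    then show "x $ i * cnj (M $$ (i, j)) * cnj (y $ j) = cnj (y $ j) * M $$ (j, i) * x $ i"
      by simp
  qed
  also have "\<dots> = braket y (M *\<^sub>v x)"
    unfolding braket_mult_mat_vec_eq_sum[OF assms(2,4,3)] ..
  finally show ?thesis .
qed

definition lincomb_vec :: "nat \<Rightarrow> nat set \<Rightarrow> (nat \<Rightarrow> complex) \<Rightarrow> (nat \<Rightarrow> complex vec) \<Rightarrow> complex vec"
  where "lincomb_vec N S c g = vec N (\<lambda>a. \<Sum>k\<in>S. c k * g k $ a)"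

lemma lincomb_vec_carrier [simp]: "lincomb_vec N S c g \<in> carrier_vec N"
  by (simp add: lincomb_vec_def)

lemma lincomb_vec_cong:
  assumes "\<And>k. k \<in> S \<Longrightarrow> c k = d k" "\<And>k. k \<in> S \<Longrightarrow> g k = h k"
  shows "lincomb_vec N S c g = lincomb_vec N S d h"
  using assms by (simp add: lincomb_vec_def)

lemma lincomb_vec_lincomb_vec:
  "lincomb_vec N S c (\<lambda>k. lincomb_vec N T (\<lambda>l. B l k) g)
    = lincomb_vec N T (\<lambda>l. \<Sum>k\<in>S. B l k * c k) g"
  unfolding lincomb_vec_def
  by (rule eq_vecI) (simp_all add: sum_distrib_left sum_distrib_right mult_ac sum.swap[of _ S])

lemma lincomb_vec_lessThan_add:
  "lincomb_vec N {..<q + n} c g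
    = lincomb_vec N {..<q} c g + lincomb_vec N {..<n} (\<lambda>j. c (q + j)) (\<lambda>j. g (q + j))"
  by (rule eq_vecI) (simp_all add: lincomb_vec_def sum_lessThan_add)

lemma braket_lincomb_vec_right:
  assumes "y \<in> carrier_vec N" "\<And>k. k \<in> S \<Longrightarrow> g k \<in> carrier_vec N" "finite S"
  shows "braket y (lincomb_vec N S c g) = (\<Sum>k\<in>S. c k * braket y (g k))"
proof -
  have "braket y (lincomb_vec N S c g) = (\<Sum>a<N. \<Sum>k\<in>S. c k * (cnj (y $ a) * g k $ a))"
    using assms by (simp add: braket_eq_sum lincomb_vec_def sum_distrib_left mult_ac)
  also have "\<dots> = (\<Sum>k\<in>S. c k * braket y (g k))"
    using assms by (subst sum.swap) (simp add: braket_eq_sum sum_distrib_left)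
  finally show ?thesis .
qed

lemma braket_lincomb_vec_left:
  assumes "y \<in> carrier_vec N" "\<And>k. k \<in> S \<Longrightarrow> g k \<in> carrier_vec N" "finite S"
  shows "braket (lincomb_vec N S c g) y = (\<Sum>k\<in>S. cnj (c k) * braket (g k) y)"
proof -
  have "braket (lincomb_vec N S c g) y = cnj (braket y (lincomb_vec N S c g))"
    using cnj_braket[OF assms(1) lincomb_vec_carrier] by simp
  also have "\<dots> = (\<Sum>k\<in>S. cnj (c k) * braket (g k) y)"
    using assms by (simp add: braket_lincomb_vec_right cnj_braket)
  finally show ?thesis .
qed

lemma braket_lincomb_vec_orthonormal:
  assumes "\<And>k. k \<in> S \<Longrightarrow> g k \<in> carrier_vec N" "finite S"
    and "\<And>k l. k \<in> S \<Longrightarrow> l \<in> S \<Longrightarrow> braket (g k) (g l) = (if k = l then 1 else 0)"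
  shows "braket (lincomb_vec N S c g) (lincomb_vec N S d g) = (\<Sum>k\<in>S. cnj (c k) * d k)"
proof -
  have "braket (lincomb_vec N S c g) (lincomb_vec N S d g)
      = (\<Sum>k\<in>S. cnj (c k) * braket (g k) (lincomb_vec N S d g))"
    by (rule braket_lincomb_vec_left) (use assms in auto)
  also have "\<dots> = (\<Sum>k\<in>S. cnj (c k) * (\<Sum>l\<in>S. d l * braket (g k) (g l)))"
    using assms(1,2) by (intro sum.cong refl) (simp add: braket_lincomb_vec_right)
  also have "\<dots> = (\<Sum>k\<in>S. cnj (c k) * d k)"
  proof (intro sum.cong refl)
    fix k assume k: "k \<in> S"
    have "(\<Sum>l\<in>S. d l * braket (g k) (g l)) = (\<Sum>l\<in>S. if l = k then d l else 0)"
      using assms(3)[OF k] by (intro sum.cong refl) auto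
    then show "cnj (c k) * (\<Sum>l\<in>S. d l * braket (g k) (g l)) = cnj (c k) * d k"
      using k assms(2) by simp
  qed
  finally show ?thesis .
qed

lemma vnorm_lincomb_vec_orthonormal:
  assumes "\<And>k. k \<in> S \<Longrightarrow> g k \<in> carrier_vec N" "finite S"
    and "\<And>k l. k \<in> S \<Longrightarrow> l \<in> S \<Longrightarrow> braket (g k) (g l) = (if k = l then 1 else 0)"
  shows "(vnorm (lincomb_vec N S c g))\<^sup>2 = (\<Sum>k\<in>S. (cmod (c k))\<^sup>2)"
proof -
  have "complex_of_real ((vnorm (lincomb_vec N S c g))\<^sup>2)
      = braket (lincomb_vec N S c g) (lincomb_vec N S c g)"
    by (rule braket_self[of _ N, symmetric]) simp
  also have "\<dots> = (\<Sum>k\<in>S. cnj (c k) * c k)"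
    by (rule braket_lincomb_vec_orthonormal[OF assms])
  also have "\<dots> = complex_of_real (\<Sum>k\<in>S. (cmod (c k))\<^sup>2)"
    by (simp add: complex_norm_square mult.commute del: of_real_power)
  finally show ?thesis
    by (simp only: of_real_eq_iff)
qed

lemma mult_mat_vec_lincomb_vec:
  assumes "M \<in> carrier_mat N K" "\<And>k. k \<in> S \<Longrightarrow> g k \<in> carrier_vec K"
  shows "M *\<^sub>v lincomb_vec K S c g = lincomb_vec N S c (\<lambda>k. M *\<^sub>v g k)"
proof (rule eq_vecI)
  fix a assume "a < dim_vec (lincomb_vec N S c (\<lambda>k. M *\<^sub>v g k))"
  then have a: "a < N" by (simp add: lincomb_vec_def)
  have "(M *\<^sub>v lincomb_vec K S c g) $ a = (\<Sum>b<K. \<Sum>k\<in>S. c k * (M $$ (a, b) * g k $ b))"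
    using mult_mat_vec_eq_sum[OF assms(1) lincomb_vec_carrier a]
    by (simp add: lincomb_vec_def sum_distrib_left mult_ac)
  also have "\<dots> = lincomb_vec N S c (\<lambda>k. M *\<^sub>v g k) $ a"
    using mult_mat_vec_eq_sum[OF assms(1) assms(2) a] a
    by (subst sum.swap) (simp add: lincomb_vec_def sum_distrib_left mult_ac)
  finally show "(M *\<^sub>v lincomb_vec K S c g) $ a = lincomb_vec N S c (\<lambda>k. M *\<^sub>v g k) $ a" .
qed (use assms in \<open>simp add: lincomb_vec_def\<close>)

lemma orthonormal_basis_carrier:
  "orthonormal_basis N u \<Longrightarrow> i < N \<Longrightarrow> u i \<in> carrier_vec N"
  by (simp add: orthonormal_basis_def)

lemma orthonormal_basis_braket:
  "orthonormal_basis N u \<Longrightarrow> i < N \<Longrightarrow> j < N \<Longrightarrow> braket (u i) (u j) = (if i = j then 1 else 0)"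
  by (simp add: orthonormal_basis_def)

lemma vnorm_orthonormal_basis:
  assumes u: "orthonormal_basis N u" and i: "i < N"
  shows "vnorm (u i) = 1"
proof -
  have "complex_of_real ((vnorm (u i))\<^sup>2) = 1"
    using braket_self[OF orthonormal_basis_carrier[OF u i]] orthonormal_basis_braket[OF u i i]
    by simp
  then have "(vnorm (u i))\<^sup>2 = 1"
    by (simp only: of_real_eq_1_iff)
  then show ?thesis
    using vnorm_nonneg[of "u i"] by (simp add: power2_eq_1_iff)
qed

(* The second identity is completeness: a one-sided inverse of a square matrix is two-sided. *)
lemma orthonormal_basis_unitary:
  assumes u: "orthonormal_basis N u"
  defines "W \<equiv> mat N N (\<lambda>(a, i). u i $ a)" and "W' \<equiv> mat N N (\<lambda>(i, a). cnj (u i $ a))"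
  shows "W' * W = 1\<^sub>m N" "W * W' = 1\<^sub>m N"
proof -
  have W: "W \<in> carrier_mat N N" and W': "W' \<in> carrier_mat N N"
    by (auto simp: W_def W'_def)
  show left: "W' * W = 1\<^sub>m N"
  proof (rule eq_matI)
    fix i j assume ij: "i < dim_row (1\<^sub>m N)" "j < dim_col (1\<^sub>m N)"
    have "(W' * W) $$ (i, j) = braket (u i) (u j)"
      using ij orthonormal_basis_carrier[OF u]
      by (simp add: W_def W'_def scalar_prod_def lessThan_atLeast0 braket_eq_sum[of _ N])
    then show "(W' * W) $$ (i, j) = 1\<^sub>m N $$ (i, j)"
      using ij orthonormal_basis_braket[OF u] by simp
  qed (auto simp: W_def W'_def)
  show "W * W' = 1\<^sub>m N"
    using mat_mult_left_right_inverse[OF W' W left] .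
qed

lemma orthonormal_basis_expansion:
  assumes u: "orthonormal_basis N u" and y: "y \<in> carrier_vec N"
  shows "y = lincomb_vec N {..<N} (\<lambda>l. braket (u l) y) u"
proof (rule eq_vecI)
  fix a assume "a < dim_vec (lincomb_vec N {..<N} (\<lambda>l. braket (u l) y) u)"
  then have a: "a < N" by (simp add: lincomb_vec_def)
  have complete: "(\<Sum>l<N. u l $ a * cnj (u l $ b)) = (if a = b then 1 else 0)" if "b < N" for b
    using arg_cong[OF orthonormal_basis_unitary(2)[OF u], of "\<lambda>A. A $$ (a, b)"] a that
    by (simp add: scalar_prod_def lessThan_atLeast0)
  have "lincomb_vec N {..<N} (\<lambda>l. braket (u l) y) u $ a
      = (\<Sum>l<N. \<Sum>b<N. cnj (u l $ b) * y $ b * u l $ a)"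
    using a orthonormal_basis_carrier[OF u]
    by (simp add: lincomb_vec_def braket_eq_sum[of _ N] sum_distrib_right)
  also have "\<dots> = (\<Sum>b<N. y $ b * (\<Sum>l<N. u l $ a * cnj (u l $ b)))"
    by (subst sum.swap) (simp add: sum_distrib_left mult_ac)
  also have "\<dots> = y $ a"
    using a by (simp add: complete if_distrib cong: if_cong)
  finally show "y $ a = lincomb_vec N {..<N} (\<lambda>l. braket (u l) y) u $ a" ..
qed (use y in \<open>simp add: lincomb_vec_def\<close>)

lemma orthonormal_basis_parseval:
  assumes u: "orthonormal_basis N u" and y: "y \<in> carrier_vec N"
  shows "(\<Sum>l<N. (cmod (braket (u l) y))\<^sup>2) = (vnorm y)\<^sup>2"
  using vnorm_lincomb_vec_orthonormal[of "{..<N}" u N "\<lambda>l. braket (u l) y"]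
    orthonormal_basis_expansion[OF u y] u
  by (simp add: orthonormal_basis_carrier orthonormal_basis_braket)

lemma quadratic_form_eigenbasis:
  assumes w: "orthonormal_basis N w" and M: "M \<in> carrier_mat N N"
    and eigen: "\<And>j. j < N \<Longrightarrow> M *\<^sub>v w j = c j \<cdot>\<^sub>v w j" and x: "x \<in> carrier_vec N"
  shows "braket x (M *\<^sub>v x) = (\<Sum>j<N. c j * of_real ((cmod (braket (w j) x))\<^sup>2))"
proof -
  have wc: "\<And>j. j \<in> {..<N} \<Longrightarrow> w j \<in> carrier_vec N"
    using orthonormal_basis_carrier[OF w] by simp
  have "M *\<^sub>v x = M *\<^sub>v lincomb_vec N {..<N} (\<lambda>j. braket (w j) x) w"
    using arg_cong[OF orthonormal_basis_expansion[OF w x], of "\<lambda>v. M *\<^sub>v v"] .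
  also have "\<dots> = lincomb_vec N {..<N} (\<lambda>j. braket (w j) x) (\<lambda>j. M *\<^sub>v w j)"
    by (rule mult_mat_vec_lincomb_vec[OF M wc])
  also have "\<dots> = lincomb_vec N {..<N} (\<lambda>j. c j * braket (w j) x) w"
  proof (rule eq_vecI)
    fix a assume "a < dim_vec (lincomb_vec N {..<N} (\<lambda>j. c j * braket (w j) x) w)"
    then have a: "a < N" by (simp add: lincomb_vec_def)
    have "(M *\<^sub>v w j) $ a = c j * w j $ a" if "j < N" for j
      using eigen[OF that] wc[of j] that a by simp
    then show "lincomb_vec N {..<N} (\<lambda>j. braket (w j) x) (\<lambda>j. M *\<^sub>v w j) $ a
        = lincomb_vec N {..<N} (\<lambda>j. c j * braket (w j) x) w $ a"
      using a by (simp add: lincomb_vec_def mult_ac)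
  qed (simp add: lincomb_vec_def)
  finally have "braket x (M *\<^sub>v x) = (\<Sum>j<N. c j * braket (w j) x * braket x (w j))"
    using braket_lincomb_vec_right[of x N "{..<N}" w "\<lambda>j. c j * braket (w j) x"] wc x
    by simp
  also have "\<dots> = (\<Sum>j<N. c j * of_real ((cmod (braket (w j) x))\<^sup>2))"
    using wc x cnj_braket[OF _ x]
    by (intro sum.cong refl) (simp add: complex_norm_square mult_ac del: of_real_power)
  finally show ?thesis .
qed

lemma orthonormal_basis_normalize:
  assumes ws: "corthogonal ws" "set ws \<subseteq> carrier_vec n" "length ws = n"
  shows "orthonormal_basis n (\<lambda>i. complex_of_real (1 / vnorm (ws ! i)) \<cdot>\<^sub>v ws ! i)"
proof -
  have wc: "ws ! i \<in> carrier_vec n" if "i < n" for i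
    using ws that by auto
  have pos: "vnorm (ws ! i) > 0" if "i < n" for i
  proof -
    have "braket (ws ! i) (ws ! i) \<noteq> 0"
      using corthogonalD[OF ws(1), of i i] ws(3) that by (simp add: braket_def)
    then show ?thesis
      using braket_self[OF wc[OF that]] vnorm_nonneg[of "ws ! i"] by force
  qed
  show ?thesis
    unfolding orthonormal_basis_def
  proof (intro conjI allI impI)
    fix i j assume ij: "i < n" "j < n"
    have "braket (complex_of_real (1 / vnorm (ws ! i)) \<cdot>\<^sub>v ws ! i)
        (complex_of_real (1 / vnorm (ws ! j)) \<cdot>\<^sub>v ws ! j)
      = complex_of_real (1 / (vnorm (ws ! i) * vnorm (ws ! j))) * braket (ws ! i) (ws ! j)"
      using wc ij by (simp add: braket_smult_left[of _ n] braket_smult_right[of _ n])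
    also have "\<dots> = (if i = j then 1 else 0)"
      using corthogonalD[OF ws(1), of j i] braket_self[OF wc[OF ij(1)]] pos[OF ij(1)] ws(3) ij
      by (auto simp: braket_def power2_eq_square)
    finally show "braket (complex_of_real (1 / vnorm (ws ! i)) \<cdot>\<^sub>v ws ! i)
        (complex_of_real (1 / vnorm (ws ! j)) \<cdot>\<^sub>v ws ! j) = (if i = j then 1 else 0)" .
  qed (use wc in auto)
qed

lemma orthonormal_basis_through:
  assumes v: "v \<in> carrier_vec n" "v \<noteq> 0\<^sub>v n"
  obtains u k where "orthonormal_basis n u" "u 0 = k \<cdot>\<^sub>v v"
proof -
  interpret cof_vec_space n "TYPE(complex)" .
  define b where "b = basis_completion v"
  define ws where "ws = gram_schmidt n b"
  from basis_completion[OF v, folded b_def]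
  have dist_b: "distinct b" and indep: "\<not> lin_dep (set b)" and b: "set b \<subseteq> carrier_vec n"
    and hd_b: "hd b = v" and len_b: "length b = n"
    by auto
  from hd_b len_b v obtain vs where bv: "b = v # vs"
    by (cases b) auto
  from gram_schmidt_result[OF b dist_b indep refl, folded ws_def]
  have ws: "corthogonal ws" "set ws \<subseteq> carrier_vec n" "length ws = n"
    by (auto simp: len_b)
  have "hd ws = v"
    using gram_schmidt_hd[OF v(1), of vs, folded bv] unfolding ws_def .
  then have "ws ! 0 = v"
    using ws(3) v by (cases ws) auto
  then show ?thesis
    using that[OF orthonormal_basis_normalize[OF ws]] by simp
qed

lemma exists_nonzero_solution:
  fixes B :: "nat \<Rightarrow> nat \<Rightarrow> complex"
  assumes "r < d"
  obtains c where "c \<in> carrier_vec d" "c \<noteq> 0\<^sub>v d" "\<And>l. l < r \<Longrightarrow> (\<Sum>k<d. B l k * c $ k) = 0"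
proof (cases "r = 0")
  case True
  have "unit_vec d 0 $ 0 = (1 :: complex)"
    using assms by simp
  then have "unit_vec d 0 \<noteq> (0\<^sub>v d :: complex vec)"
    using assms by auto
  then show ?thesis
    using that[of "unit_vec d 0"] True by simp
next
  case False
  (* Repeating the last equation makes the system square and singular. *)
  define Bm where "Bm = mat d d (\<lambda>(l, k). B (min l (r - 1)) k)"
  have Bm: "Bm \<in> carrier_mat d d"
    by (simp add: Bm_def)
  have "det Bm = 0"
    by (rule det_identical_rows[OF Bm, of "r - 1" r])
      (use False assms in \<open>auto simp: Bm_def\<close>)
  then obtain c where c: "c \<in> carrier_vec d" "c \<noteq> 0\<^sub>v d" "Bm *\<^sub>v c = 0\<^sub>v d"
    using det_0_iff_vec_prod_zero[OF Bm] by auto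
  have "(\<Sum>k<d. B l k * c $ k) = 0" if "l < r" for l
    using arg_cong[OF c(3), of "\<lambda>v. v $ l"] mult_mat_vec_eq_sum[OF Bm c(1), of l] that assms
    by (simp add: Bm_def)
  then show ?thesis
    using that c by blast
qed

lemma exists_lincomb_vec_orthogonal:
  assumes "r < d" "\<And>k. k < d \<Longrightarrow> g k \<in> carrier_vec N" "\<And>l. l < r \<Longrightarrow> h l \<in> carrier_vec N"
  obtains c where "c \<in> carrier_vec d" "c \<noteq> 0\<^sub>v d"
    "\<And>l. l < r \<Longrightarrow> braket (h l) (lincomb_vec N {..<d} (\<lambda>k. c $ k) g) = 0"
proof -
  obtain c where c: "c \<in> carrier_vec d" "c \<noteq> 0\<^sub>v d"
    and orth: "\<And>l. l < r \<Longrightarrow> (\<Sum>k<d. braket (h l) (g k) * c $ k) = 0"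
    using exists_nonzero_solution[OF assms(1), of "\<lambda>l k. braket (h l) (g k)"] by blast
  have "braket (h l) (lincomb_vec N {..<d} (\<lambda>k. c $ k) g) = 0" if "l < r" for l
    using braket_lincomb_vec_right[OF assms(3)[OF that], of "{..<d}" g] assms(2) orth[OF that]
    by (simp add: mult.commute)
  then show ?thesis
    using that c by blast
qed

section \<open>The spectral theorem for Hermitian matrices\<close>

lemma hermitian_eigenvalue_real:
  assumes M: "M \<in> carrier_mat n n" "hermitian_mat M"
    and v: "v \<in> carrier_vec n" "v \<noteq> 0\<^sub>v n" "M *\<^sub>v v = c \<cdot>\<^sub>v v"
  shows "c = of_real (Re c)"
proof -
  have quad: "braket v (M *\<^sub>v v) = c * of_real ((vnorm v)\<^sup>2)"
    using braket_smult_right[OF v(1) v(1)] braket_self[OF v(1)] v(3) by simp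
  have "vnorm v \<noteq> 0"
    using vnorm_eq_0_iff[OF v(1)] v(2) by simp
  moreover have "cnj (braket v (M *\<^sub>v v)) = braket v (M *\<^sub>v v)"
    by (rule cnj_braket_hermitian[OF M(2,1) v(1) v(1)])
  ultimately have "cnj c = c"
    unfolding quad by simp
  then show ?thesis
    by (simp add: complex_eq_iff)
qed

lemma char_poly_orthonormal_compression:
  assumes M: "M \<in> carrier_mat n n" and u: "orthonormal_basis n u"
  shows "char_poly M = char_poly (mat n n (\<lambda>(i, j). braket (u i) (M *\<^sub>v u j)))"
proof -
  define W where "W = mat n n (\<lambda>(a, i). u i $ a)"
  define W' where "W' = mat n n (\<lambda>(i, a). cnj (u i $ a))"
  have W: "W \<in> carrier_mat n n" "W' \<in> carrier_mat n n"
    by (auto simp: W_def W'_def)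
  note unitary = orthonormal_basis_unitary[OF u, folded W_def W'_def]
  have MW: "M * W = mat n n (\<lambda>(a, j). (M *\<^sub>v u j) $ a)"
  proof (rule eq_matI)
    fix a j assume "a < dim_row (mat n n (\<lambda>(a, j). (M *\<^sub>v u j) $ a))"
      "j < dim_col (mat n n (\<lambda>(a, j). (M *\<^sub>v u j) $ a))"
    moreover have "col W j = u j" if "j < n"
      using orthonormal_basis_carrier[OF u that] that by (auto simp: W_def)
    ultimately show "(M * W) $$ (a, j) = mat n n (\<lambda>(a, j). (M *\<^sub>v u j) $ a) $$ (a, j)"
      using M W by simp
  qed (use M W in auto)
  have "mat n n (\<lambda>(i, j). braket (u i) (M *\<^sub>v u j)) = W' * M * W"
  proof (rule eq_matI)
    fix i j assume "i < dim_row (W' * M * W)" "j < dim_col (W' * M * W)"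
    then have ij: "i < n" "j < n"
      using W M by auto
    have "(W' * M * W) $$ (i, j) = (\<Sum>a<n. cnj (u i $ a) * (M *\<^sub>v u j) $ a)"
      using ij M W unfolding assoc_mult_mat[OF W(2) M W(1)] MW
      by (simp add: W'_def scalar_prod_def lessThan_atLeast0)
    then show "mat n n (\<lambda>(i, j). braket (u i) (M *\<^sub>v u j)) $$ (i, j) = (W' * M * W) $$ (i, j)"
      using ij orthonormal_basis_carrier[OF u] by (simp add: braket_eq_sum[of _ n])
  qed (use M W in auto)
  moreover have "W * (W' * M * W) * W' = (W * W') * M * (W * W')"
    using M W by (simp add: assoc_mult_mat[of _ n n _ n _ n])
  then have "M = W * (W' * M * W) * W'"
    using M unitary by simp
  ultimately have "similar_mat M (mat n n (\<lambda>(i, j). braket (u i) (M *\<^sub>v u j)))"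
    using M W unitary by (intro similar_matI[of _ _ W W' n]) auto
  then show ?thesis
    by (rule char_poly_similar)
qed

(* In the basis u the matrix M is block diagonal with blocks c and compression; lift maps
   coordinates with respect to u 1, ..., u n back to vectors. *)
locale eigenvector_deflation =
  fixes n :: nat and M :: "complex mat" and u :: "nat \<Rightarrow> complex vec" and c :: complex
  assumes M: "M \<in> carrier_mat (Suc n) (Suc n)" "hermitian_mat M"
    and u: "orthonormal_basis (Suc n) u"
    and eigen: "M *\<^sub>v u 0 = c \<cdot>\<^sub>v u 0"
begin

definition compression :: "complex mat"
  where "compression = mat n n (\<lambda>(i, j). braket (u (Suc i)) (M *\<^sub>v u (Suc j)))"

definition lift :: "complex vec \<Rightarrow> complex vec"
  where "lift y = lincomb_vec (Suc n) {..<n} (\<lambda>k. y $ k) (\<lambda>k. u (Suc k))"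

lemma u_carrier: "i < Suc n \<Longrightarrow> u i \<in> carrier_vec (Suc n)"
  using orthonormal_basis_carrier[OF u] .

lemma braket_mult_mat_vec_u0: "i < Suc n \<Longrightarrow> braket (u i) (M *\<^sub>v u 0) = (if i = 0 then c else 0)"
  using braket_smult_right[OF u_carrier u_carrier, of i 0 c] orthonormal_basis_braket[OF u, of i 0]
  by (simp add: eigen)

lemma braket_u0_mult_mat_vec: "j < n \<Longrightarrow> braket (u 0) (M *\<^sub>v u (Suc j)) = 0"
  using cnj_braket_hermitian[OF M(2,1) u_carrier u_carrier, of "Suc j" 0]
    braket_mult_mat_vec_u0[of "Suc j"]
  by simp

lemma compression_carrier: "compression \<in> carrier_mat n n"
  by (simp add: compression_def)

lemma hermitian_compression: "hermitian_mat compression"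
  using cnj_braket_hermitian[OF M(2,1) u_carrier u_carrier]
  by (intro hermitian_matI[OF compression_carrier]) (simp add: compression_def)

lemma char_poly_deflation: "char_poly M = [:-c, 1:] * char_poly compression"
proof -
  have "char_poly M = char_poly (mat (Suc n) (Suc n) (\<lambda>(i, j). braket (u i) (M *\<^sub>v u j)))"
    by (rule char_poly_orthonormal_compression[OF M(1) u])
  also have "mat (Suc n) (Suc n) (\<lambda>(i, j). braket (u i) (M *\<^sub>v u j))
      = four_block_mat (mat 1 1 (\<lambda>_. c)) (mat 1 n (\<lambda>(_, j). braket (u 0) (M *\<^sub>v u (Suc j))))
          (0\<^sub>m n 1) compression"
    using braket_mult_mat_vec_u0
    by (intro eq_matI) (auto simp: compression_def less_Suc_eq_0_disj)
  also have "char_poly \<dots> = char_poly (mat 1 1 (\<lambda>_. c)) * char_poly compression"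
    by (rule char_poly_four_block_zeros_col) (auto simp: compression_carrier)
  also have "char_poly (mat 1 1 (\<lambda>_. c)) = [:-c, 1:]"
    by (simp add: char_poly_defs det_def sign_def)
  finally show ?thesis .
qed

lemma lift_carrier: "lift y \<in> carrier_vec (Suc n)"
  by (simp add: lift_def)

lemma braket_lift_lift:
  assumes "y \<in> carrier_vec n" "z \<in> carrier_vec n"
  shows "braket (lift y) (lift z) = braket y z"
  using braket_lincomb_vec_orthonormal[of "{..<n}" "\<lambda>k. u (Suc k)" "Suc n"] u_carrier
    orthonormal_basis_braket[OF u] assms
  by (simp add: lift_def braket_eq_sum[of y n])

lemma braket_u0_lift: "braket (u 0) (lift z) = 0"
  using braket_lincomb_vec_right[of "u 0" "Suc n" "{..<n}" "\<lambda>k. u (Suc k)"] u_carrier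
    orthonormal_basis_braket[OF u]
  by (simp add: lift_def)

lemma lift_smult: "y \<in> carrier_vec n \<Longrightarrow> lift (a \<cdot>\<^sub>v y) = a \<cdot>\<^sub>v lift y"
  by (intro eq_vecI) (auto simp: lift_def lincomb_vec_def sum_distrib_left mult_ac)

lemma mult_mat_vec_u_Suc:
  assumes "k < n"
  shows "M *\<^sub>v u (Suc k) = lincomb_vec (Suc n) {..<n} (\<lambda>l. compression $$ (l, k)) (\<lambda>l. u (Suc l))"
proof -
  have Mu: "M *\<^sub>v u (Suc k) \<in> carrier_vec (Suc n)"
    using M(1) u_carrier[of "Suc k"] assms by simp
  show ?thesis
  proof (subst orthonormal_basis_expansion[OF u Mu], rule eq_vecI)
    fix a
    assume "a < dim_vec (lincomb_vec (Suc n) {..<n} (\<lambda>l. compression $$ (l, k)) (\<lambda>l. u (Suc l)))"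
    then show "lincomb_vec (Suc n) {..<Suc n} (\<lambda>l. braket (u l) (M *\<^sub>v u (Suc k))) u $ a
        = lincomb_vec (Suc n) {..<n} (\<lambda>l. compression $$ (l, k)) (\<lambda>l. u (Suc l)) $ a"
      using braket_u0_mult_mat_vec[OF assms] assms
      by (simp add: lincomb_vec_def sum.lessThan_Suc_shift compression_def del: sum.lessThan_Suc)
  qed (simp add: lincomb_vec_def)
qed

lemma mult_mat_vec_lift:
  assumes y: "y \<in> carrier_vec n"
  shows "M *\<^sub>v lift y = lift (compression *\<^sub>v y)"
proof -
  have "M *\<^sub>v lift y = lincomb_vec (Suc n) {..<n} (\<lambda>k. y $ k) (\<lambda>k. M *\<^sub>v u (Suc k))"
    unfolding lift_def by (rule mult_mat_vec_lincomb_vec[OF M(1)]) (simp add: u_carrier)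
  also have "\<dots> = lincomb_vec (Suc n) {..<n} (\<lambda>k. y $ k)
      (\<lambda>k. lincomb_vec (Suc n) {..<n} (\<lambda>l. compression $$ (l, k)) (\<lambda>l. u (Suc l)))"
    by (rule lincomb_vec_cong) (simp_all add: mult_mat_vec_u_Suc)
  also have "\<dots> = lift (compression *\<^sub>v y)"
    unfolding lincomb_vec_lincomb_vec lift_def
    using mult_mat_vec_eq_sum[OF compression_carrier y] by (intro lincomb_vec_cong) auto
  finally show ?thesis .
qed

lemma eigenbasis_extend:
  assumes w: "orthonormal_basis n w" and eigen_w: "\<forall>i<n. compression *\<^sub>v w i = es ! i \<cdot>\<^sub>v w i"
  defines "v \<equiv> \<lambda>i. if i = 0 then u 0 else lift (w (i - 1))"
  shows "orthonormal_basis (Suc n) v" "\<forall>i<Suc n. M *\<^sub>v v i = (c # es) ! i \<cdot>\<^sub>v v i"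
proof -
  have wc: "\<And>i. i < n \<Longrightarrow> w i \<in> carrier_vec n"
    using orthonormal_basis_carrier[OF w] .
  have vc: "v i \<in> carrier_vec (Suc n)" for i
    using u_carrier[of 0] lift_carrier by (simp add: v_def)
  show "orthonormal_basis (Suc n) v"
    unfolding orthonormal_basis_def
  proof (intro conjI allI impI vc)
    fix i j assume ij: "i < Suc n" "j < Suc n"
    consider "i = 0" "j = 0" | "i = 0" "j \<noteq> 0" | "i \<noteq> 0" "j = 0" | "i \<noteq> 0" "j \<noteq> 0"
      by blast
    then show "braket (v i) (v j) = (if i = j then 1 else 0)"
    proof cases
      case 3
      then have "braket (v i) (v j) = cnj (braket (v j) (v i))"
        using cnj_braket[OF vc vc] by simp
      then show ?thesis
        using 3 braket_u0_lift by (simp add: v_def)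
    next
      case 4
      then show ?thesis
        using ij braket_lift_lift[OF wc wc] orthonormal_basis_braket[OF w, of "i - 1" "j - 1"]
        by (auto simp: v_def)
    qed (use braket_u0_lift orthonormal_basis_braket[OF u] in \<open>auto simp: v_def\<close>)
  qed
  show "\<forall>i<Suc n. M *\<^sub>v v i = (c # es) ! i \<cdot>\<^sub>v v i"
  proof (intro allI impI)
    fix i assume "i < Suc n"
    then show "M *\<^sub>v v i = (c # es) ! i \<cdot>\<^sub>v v i"
      using eigen mult_mat_vec_lift[OF wc] eigen_w lift_smult[OF wc]
      by (cases i) (auto simp: v_def)
  qed
qed

end

lemma hermitian_eigenbasis_exists:
  assumes "M \<in> carrier_mat n n" "hermitian_mat M" "char_poly M = (\<Prod>c\<leftarrow>es. [:-c, 1:])"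
  shows "\<exists>w. orthonormal_basis n w \<and> (\<forall>i<n. M *\<^sub>v w i = es ! i \<cdot>\<^sub>v w i)"
  using assms
proof (induction es arbitrary: n M)
  case Nil
  then have "n = 0"
    using degree_monic_char_poly[OF Nil(1)] by simp
  then show ?case
    by (auto simp: orthonormal_basis_def)
next
  case (Cons c es n M)
  then obtain n1 where n: "n = Suc n1"
    using degree_monic_char_poly[OF Cons(2)] degree_linear_factors[of "\<lambda>c. -c" "c # es"]
    by (cases n) auto
  have "eigenvalue M c"
    unfolding eigenvalue_root_char_poly[OF Cons(2)] Cons(4) by simp
  then have v: "eigenvector M (find_eigenvector M c) c"
    by (rule find_eigenvector[OF Cons(2)])
  then have "find_eigenvector M c \<in> carrier_vec n" "find_eigenvector M c \<noteq> 0\<^sub>v n"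
    using Cons(2) unfolding eigenvector_def by auto
  then obtain u k where u: "orthonormal_basis n u" and u0: "u 0 = k \<cdot>\<^sub>v find_eigenvector M c"
    by (rule orthonormal_basis_through)
  have "M *\<^sub>v u 0 = c \<cdot>\<^sub>v u 0"
    using v Cons(2) unfolding u0 eigenvector_def
    by (simp add: mult_mat_vec smult_smult_assoc mult.commute)
  then interpret eigenvector_deflation n1 M u c
    using Cons(2,3) u n by unfold_locales simp_all
  have "[:-c, 1:] * char_poly compression = [:-c, 1:] * (\<Prod>c\<leftarrow>es. [:-c, 1:])"
    using Cons(4) char_poly_deflation by simp
  then have "char_poly compression = (\<Prod>c\<leftarrow>es. [:-c, 1:])"
    by (metis mult_cancel_left pCons_eq_0_iff zero_neq_one)
  then obtain w where "orthonormal_basis n1 w" "\<forall>i<n1. compression *\<^sub>v w i = es ! i \<cdot>\<^sub>v w i"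
    using Cons.IH compression_carrier hermitian_compression by blast
  then show ?case
    using eigenbasis_extend n by blast
qed

lemma hermitian_sorted_eigenbasis:
  assumes M: "M \<in> carrier_mat n n" "hermitian_mat M"
  obtains w \<mu> where "orthonormal_basis n w"
    "\<And>i. i < n \<Longrightarrow> M *\<^sub>v w i = complex_of_real (\<mu> i) \<cdot>\<^sub>v w i"
    "\<And>i j. i \<le> j \<Longrightarrow> j < n \<Longrightarrow> \<mu> j \<le> \<mu> i"
proof -
  obtain es where es: "char_poly M = (\<Prod>a\<leftarrow>es. [:- a, 1:])" "length es = n"
    using char_poly_factorized[OF M(1)] by blast
  have real: "c = of_real (Re c)" if "c \<in> set es" for c
  proof -
    have "eigenvalue M c"
      unfolding eigenvalue_root_char_poly[OF M(1)] es(1) using that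
      by (auto simp: poly_prod_list)
    from find_eigenvector[OF M(1) this] show ?thesis
      using hermitian_eigenvalue_real[OF M] M(1) unfolding eigenvector_def by auto
  qed
  define rs where "rs = rev (sort (map Re es))"
  have len: "length rs = n"
    using es(2) by (simp add: rs_def)
  have "mset (map complex_of_real rs) = image_mset complex_of_real (mset (map Re es))"
    by (simp add: rs_def)
  also have "\<dots> = mset (map (\<lambda>c. complex_of_real (Re c)) es)"
    by (simp add: image_mset.compositionality comp_def)
  also have "map (\<lambda>c. complex_of_real (Re c)) es = es"
    using real by (intro map_idI) auto
  finally have "char_poly M = (\<Prod>a\<leftarrow>map complex_of_real rs. [:- a, 1:])"
    unfolding es(1) by (rule prod_list_map_mset_cong[symmetric])
  then obtain w where w: "orthonormal_basis n w"
    "\<forall>i<n. M *\<^sub>v w i = map complex_of_real rs ! i \<cdot>\<^sub>v w i"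
    using hermitian_eigenbasis_exists[OF M] by blast
  show ?thesis
  proof (rule that[OF w(1)])
    show "M *\<^sub>v w i = complex_of_real (rs ! i) \<cdot>\<^sub>v w i" if "i < n" for i
      using w(2) that len by simp
    show "rs ! j \<le> rs ! i" if "i \<le> j" "j < n" for i j
      using sorted_rev_nth_mono[of rs i j] that len by (simp add: rs_def)
  qed
qed

section \<open>Operator norms of submatrices\<close>

lemma op_norm_set_bdd_above:
  assumes M: "M \<in> carrier_mat a b"
  shows "bdd_above {vnorm (M *\<^sub>v v) | v. v \<in> carrier_vec (dim_col M) \<and> vnorm v \<le> 1}"
proof (rule bdd_aboveI)
  fix z assume "z \<in> {vnorm (M *\<^sub>v v) | v. v \<in> carrier_vec (dim_col M) \<and> vnorm v \<le> 1}"
  then obtain v where v: "v \<in> carrier_vec b" "vnorm v \<le> 1" and z: "z = vnorm (M *\<^sub>v v)"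
    using M by auto
  have "cmod (v $ j) \<le> 1" if "j < b" for j
  proof -
    have "(cmod (v $ j))\<^sup>2 \<le> (vnorm v)\<^sup>2"
      unfolding vnorm_square[OF v(1)] using that by (intro member_le_sum) auto
    also have "\<dots> \<le> 1"
      using v(2) vnorm_nonneg[of v] by (simp add: power_le_one)
    finally show ?thesis
      by (simp add: power_le_one_iff)
  qed
  then have "cmod ((M *\<^sub>v v) $ i) \<le> (\<Sum>j<b. cmod (M $$ (i, j)))" if "i < a" for i
    unfolding mult_mat_vec_eq_sum[OF M v(1) that]
    by (intro order_trans[OF norm_sum] sum_mono)
      (auto simp: norm_mult intro: mult_left_le)
  then show "z \<le> sqrt (\<Sum>i<a. (\<Sum>j<b. cmod (M $$ (i, j)))\<^sup>2)"
    using M v unfolding z vnorm_def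
    by (auto intro!: real_sqrt_le_mono sum_mono power_mono)
qed

lemma op_norm_nonneg:
  assumes M: "M \<in> carrier_mat a b"
  shows "op_norm M \<ge> 0"
proof -
  have "vnorm (M *\<^sub>v 0\<^sub>v b) \<in> {vnorm (M *\<^sub>v v) | v. v \<in> carrier_vec (dim_col M) \<and> vnorm v \<le> 1}"
    using M by (intro CollectI exI[of _ "0\<^sub>v b"]) (simp add: vnorm_def)
  then show ?thesis
    unfolding op_norm_def using cSup_upper[OF _ op_norm_set_bdd_above[OF M]] vnorm_nonneg
    by (meson order_trans)
qed

lemma op_norm_mult_vec_le:
  assumes M: "M \<in> carrier_mat a b" and x: "x \<in> carrier_vec b"
  shows "vnorm (M *\<^sub>v x) \<le> op_norm M * vnorm x"
proof (cases "vnorm x = 0")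
  case True
  then show ?thesis
    using M x vnorm_eq_0_iff[OF x] by (simp add: vnorm_def)
next
  case False
  then have r: "vnorm x > 0"
    using vnorm_nonneg[of x] by simp
  define y where "y = complex_of_real (1 / vnorm x) \<cdot>\<^sub>v x"
  have y: "y \<in> carrier_vec b" "vnorm y = 1"
    using x r by (simp_all add: y_def vnorm_smult[OF x] norm_divide)
  then have "vnorm (M *\<^sub>v y) \<le> op_norm M"
    unfolding op_norm_def using M
    by (intro cSup_upper[OF _ op_norm_set_bdd_above[OF M]]) auto
  moreover have "vnorm (M *\<^sub>v y) = vnorm (M *\<^sub>v x) / vnorm x"
    using M x r vnorm_smult[of "M *\<^sub>v x" a]
    by (simp add: y_def mult_mat_vec[OF M x] norm_divide)
  ultimately show ?thesis
    using r by (simp add: pos_divide_le_eq)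
qed

lemma cmod_bilinear_le_op_norm:
  assumes M: "M \<in> carrier_mat a b"
  shows "cmod (\<Sum>i<a. \<Sum>j<b. cnj (\<alpha> i) * M $$ (i, j) * \<beta> j)
    \<le> op_norm M * sqrt (\<Sum>i<a. (cmod (\<alpha> i))\<^sup>2) * sqrt (\<Sum>j<b. (cmod (\<beta> j))\<^sup>2)"
proof -
  define y where "y = vec b \<beta>"
  have y: "y \<in> carrier_vec b"
    by (simp add: y_def)
  have "(\<Sum>i<a. \<Sum>j<b. cnj (\<alpha> i) * M $$ (i, j) * \<beta> j) = (\<Sum>i<a. cnj (\<alpha> i) * (M *\<^sub>v y) $ i)"
    using mult_mat_vec_eq_sum[OF M y] by (simp add: y_def sum_distrib_left mult.assoc)
  then have "cmod (\<Sum>i<a. \<Sum>j<b. cnj (\<alpha> i) * M $$ (i, j) * \<beta> j)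
      \<le> sqrt (\<Sum>i<a. (cmod (\<alpha> i))\<^sup>2) * vnorm (M *\<^sub>v y)"
    using Cauchy_Schwarz_complex_sum[of \<alpha> "\<lambda>i. (M *\<^sub>v y) $ i" "{..<a}"] M
    by (simp add: vnorm_def)
  also have "\<dots> \<le> sqrt (\<Sum>i<a. (cmod (\<alpha> i))\<^sup>2) * (op_norm M * vnorm y)"
    by (intro mult_left_mono op_norm_mult_vec_le[OF M y]) (simp add: sum_nonneg)
  finally show ?thesis
    by (simp add: y_def vnorm_def mult_ac)
qed

lemma pick_atLeastLessThan:
  assumes "k < q"
  shows "pick {p..<p + q} k = p + k"
proof -
  have "{a \<in> {p..<p + q}. a < p + k} = {p..<p + k}"
    using assms by auto
  then show ?thesis
    using pick_card_in_set[of "p + k" "{p..<p + q}"] assms by simp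
qed

lemma submatrix_atLeastLessThan:
  assumes U: "U \<in> carrier_mat R C" and "p + q \<le> R" "p' + r \<le> C"
  shows "submatrix U {p..<p + q} {p'..<p' + r} \<in> carrier_mat q r"
    and "\<And>k j. k < q \<Longrightarrow> j < r \<Longrightarrow>
      submatrix U {p..<p + q} {p'..<p' + r} $$ (k, j) = U $$ (p + k, p' + j)"
proof -
  have "{i. i < dim_row U \<and> i \<in> {p..<p + q}} = {p..<p + q}"
    and "{i. i < dim_col U \<and> i \<in> {p'..<p' + r}} = {p'..<p' + r}"
    using assms by auto
  then have rows: "card {i. i < dim_row U \<and> i \<in> {p..<p + q}} = q"
    and cols: "card {i. i < dim_col U \<and> i \<in> {p'..<p' + r}} = r"
    by simp_all
  show "submatrix U {p..<p + q} {p'..<p' + r} \<in> carrier_mat q r"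
    unfolding carrier_mat_def using rows cols by (simp add: dim_submatrix)
  show "submatrix U {p..<p + q} {p'..<p' + r} $$ (k, j) = U $$ (p + k, p' + j)"
    if "k < q" "j < r" for k j
    using submatrix_index[of k U "{p..<p + q}" j "{p'..<p' + r}"] that rows cols
    by (simp add: pick_atLeastLessThan)
qed

lemma op_norm_submatrix_le_s_val:
  assumes "I \<subseteq> {0..<N}" "J \<subseteq> {0..<N}" "card I + card J = k + 1"
  shows "op_norm (submatrix U I J) \<le> s_val N U k"
  unfolding s_val_def
proof (rule Max_ge)
  have "{op_norm (submatrix U I J) | I J. I \<subseteq> {0..<N} \<and> J \<subseteq> {0..<N} \<and> card I + card J = k + 1}
      \<subseteq> (\<lambda>(I, J). op_norm (submatrix U I J)) ` (Pow {0..<N} \<times> Pow {0..<N})"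
    by auto
  then show "finite {op_norm (submatrix U I J) | I J.
      I \<subseteq> {0..<N} \<and> J \<subseteq> {0..<N} \<and> card I + card J = k + 1}"
    by (rule finite_subset) auto
qed (use assms in blast)

section \<open>Projections, the min-max principle and Ky Fan's inequality\<close>

definition proj_norm_sq :: "(nat \<Rightarrow> complex vec) \<Rightarrow> nat \<Rightarrow> complex vec \<Rightarrow> real"
  where "proj_norm_sq u k x = (\<Sum>i<k. (cmod (braket (u i) x))\<^sup>2)"

lemma proj_norm_sq_nonneg: "proj_norm_sq u k x \<ge> 0"
  by (simp add: proj_norm_sq_def sum_nonneg)

lemma proj_norm_sq_le:
  assumes "orthonormal_basis N u" "k \<le> N" "x \<in> carrier_vec N"
  shows "proj_norm_sq u k x \<le> (vnorm x)\<^sup>2"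
  unfolding proj_norm_sq_def orthonormal_basis_parseval[OF assms(1,3), symmetric]
  using assms(2) by (intro sum_mono2) auto

lemma proj_norm_sq_add:
  "proj_norm_sq u (p + q) x = proj_norm_sq u p x + proj_norm_sq (\<lambda>k. u (p + k)) q x"
  by (simp add: proj_norm_sq_def sum_lessThan_add)

lemma braket_lincomb_vec_coefficients:
  assumes "\<And>i. i < k \<Longrightarrow> u i \<in> carrier_vec N" "x \<in> carrier_vec N"
  shows "braket x (lincomb_vec N {..<k} (\<lambda>i. braket (u i) x) u) = of_real (proj_norm_sq u k x)"
  using braket_lincomb_vec_right[OF assms(2), of "{..<k}" u] assms cnj_braket[OF _ assms(2)]
  by (simp add: proj_norm_sq_def complex_norm_square mult.commute del: of_real_power)

lemma cmod_braket_lincomb_vec_le: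
  assumes "x \<in> carrier_vec N" "\<And>k. k < d \<Longrightarrow> g k \<in> carrier_vec N"
  shows "cmod (braket x (lincomb_vec N {..<d} c g))
    \<le> sqrt (proj_norm_sq g d x) * sqrt (\<Sum>k<d. (cmod (c k))\<^sup>2)"
proof -
  have "braket x (lincomb_vec N {..<d} c g) = (\<Sum>k<d. cnj (braket (g k) x) * c k)"
    using braket_lincomb_vec_right[OF assms(1), of "{..<d}" g c] assms cnj_braket[OF _ assms(1)]
    by (simp add: mult.commute)
  then show ?thesis
    unfolding proj_norm_sq_def by (simp add: Cauchy_Schwarz_complex_sum)
qed

lemma sum_proj_norm_sq_orthonormal_basis:
  assumes w: "orthonormal_basis N w" and u: "orthonormal_basis N u" and k: "k \<le> N"
  shows "(\<Sum>j<N. proj_norm_sq u k (w j)) = real k"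
proof -
  have "(\<Sum>j<N. proj_norm_sq u k (w j)) = (\<Sum>i<k. \<Sum>j<N. (cmod (braket (w j) (u i)))\<^sup>2)"
    unfolding proj_norm_sq_def
    using k orthonormal_basis_carrier[OF u] orthonormal_basis_carrier[OF w]
    by (subst sum.swap) (auto intro!: sum.cong simp: cmod_braket_commute[of _ N])
  also have "\<dots> = (\<Sum>i<k. 1)"
    using k orthonormal_basis_parseval[OF w orthonormal_basis_carrier[OF u]]
      vnorm_orthonormal_basis[OF u] by (intro sum.cong refl) simp
  finally show ?thesis
    by simp
qed

lemma sum_expectations_eigenbasis:
  assumes v: "orthonormal_basis N v" and M: "M \<in> carrier_mat N N"
    and eigen: "\<And>l. l < N \<Longrightarrow> M *\<^sub>v v l = complex_of_real (c l) \<cdot>\<^sub>v v l"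
    and u: "\<And>i. i < k \<Longrightarrow> u i \<in> carrier_vec N"
  shows "(\<Sum>i<k. Re (braket (u i) (M *\<^sub>v u i))) = (\<Sum>l<N. c l * proj_norm_sq u k (v l))"
proof -
  have "(\<Sum>i<k. Re (braket (u i) (M *\<^sub>v u i))) = (\<Sum>i<k. \<Sum>l<N. c l * (cmod (braket (u i) (v l)))\<^sup>2)"
    using quadratic_form_eigenbasis[OF v M eigen u] orthonormal_basis_carrier[OF v] u
    by (intro sum.cong refl) (simp add: cmod_braket_commute[of _ N])
  also have "\<dots> = (\<Sum>l<N. c l * proj_norm_sq u k (v l))"
    unfolding proj_norm_sq_def sum_distrib_left by (rule sum.swap)
  finally show ?thesis .
qed

definition proj_mat :: "nat \<Rightarrow> (nat \<Rightarrow> complex vec) \<Rightarrow> nat \<Rightarrow> complex mat"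
  where "proj_mat N u k = mat N N (\<lambda>(a, b). \<Sum>i<k. u i $ a * cnj (u i $ b))"

lemma proj_mat_carrier [simp]: "proj_mat N u k \<in> carrier_mat N N"
  by (simp add: proj_mat_def)

lemma braket_proj_mat:
  assumes "\<And>i. i < k \<Longrightarrow> u i \<in> carrier_vec N" "x \<in> carrier_vec N"
  shows "braket x (proj_mat N u k *\<^sub>v x) = of_real (proj_norm_sq u k x)"
proof -
  have "proj_mat N u k *\<^sub>v x = lincomb_vec N {..<k} (\<lambda>i. braket (u i) x) u"
  proof (rule eq_vecI)
    fix a assume "a < dim_vec (lincomb_vec N {..<k} (\<lambda>i. braket (u i) x) u)"
    then have a: "a < N"
      by (simp add: lincomb_vec_def)
    have "(proj_mat N u k *\<^sub>v x) $ a = (\<Sum>b<N. \<Sum>i<k. u i $ a * cnj (u i $ b) * x $ b)"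
      using mult_mat_vec_eq_sum[OF proj_mat_carrier assms(2) a] a
      by (simp add: proj_mat_def sum_distrib_right)
    also have "\<dots> = lincomb_vec N {..<k} (\<lambda>i. braket (u i) x) u $ a"
      using a assms(1) by (subst sum.swap) (simp add: lincomb_vec_def braket_eq_sum[of _ N]
          sum_distrib_left sum_distrib_right mult_ac)
    finally show "(proj_mat N u k *\<^sub>v x) $ a = lincomb_vec N {..<k} (\<lambda>i. braket (u i) x) u $ a" .
  qed (simp add: lincomb_vec_def proj_mat_def)
  then show ?thesis
    using braket_lincomb_vec_coefficients[OF assms] by simp
qed

lemma hermitian_proj_mat_add: "hermitian_mat (proj_mat N u k + proj_mat N u' k')"
  by (rule hermitian_matI[of _ N]) (auto simp: proj_mat_def mult.commute)

locale sorted_eigenbasis =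
  fixes N :: nat and A :: "complex mat" and w :: "nat \<Rightarrow> complex vec" and \<mu> :: "nat \<Rightarrow> real"
  assumes A: "A \<in> carrier_mat N N"
    and w: "orthonormal_basis N w"
    and eigen: "\<And>i. i < N \<Longrightarrow> A *\<^sub>v w i = complex_of_real (\<mu> i) \<cdot>\<^sub>v w i"
    and sorted: "\<And>i j. i \<le> j \<Longrightarrow> j < N \<Longrightarrow> \<mu> j \<le> \<mu> i"
begin

lemma w_carrier: "j < N \<Longrightarrow> w j \<in> carrier_vec N"
  using orthonormal_basis_carrier[OF w] .

lemma quadratic_form_eq:
  assumes "x \<in> carrier_vec N"
  shows "Re (braket x (A *\<^sub>v x)) = (\<Sum>j<N. \<mu> j * (cmod (braket (w j) x))\<^sup>2)"
  using quadratic_form_eigenbasis[OF w A eigen assms] by simp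

lemma eigenvalue_eq:
  assumes j: "j < N"
  shows "\<mu> j = Re (braket (w j) (A *\<^sub>v w j))"
proof -
  have "Re (braket (w j) (A *\<^sub>v w j)) = (\<Sum>l<N. if l = j then \<mu> l else 0)"
    unfolding quadratic_form_eq[OF w_carrier[OF j]]
    using orthonormal_basis_braket[OF w] j by (intro sum.cong refl) auto
  then show ?thesis
    using j by simp
qed

lemma quadratic_form_ge_head:
  assumes x: "x \<in> carrier_vec N" and d: "0 < d" "d \<le> N"
    and orth: "\<And>j. d \<le> j \<Longrightarrow> j < N \<Longrightarrow> braket (w j) x = 0"
  shows "\<mu> (d - 1) * (vnorm x)\<^sup>2 \<le> Re (braket x (A *\<^sub>v x))"
  unfolding quadratic_form_eq[OF x] orthonormal_basis_parseval[OF w x, symmetric] sum_distrib_left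
proof (rule sum_mono)
  fix j assume "j \<in> {..<N}"
  then show "\<mu> (d - 1) * (cmod (braket (w j) x))\<^sup>2 \<le> \<mu> j * (cmod (braket (w j) x))\<^sup>2"
    using sorted[of j "d - 1"] orth[of j] d by (cases "j < d") (auto intro: mult_right_mono)
qed

lemma quadratic_form_le_tail:
  assumes x: "x \<in> carrier_vec N" and d: "d < N"
    and orth: "\<And>j. j < d \<Longrightarrow> braket (w j) x = 0"
  shows "Re (braket x (A *\<^sub>v x)) \<le> \<mu> d * (vnorm x)\<^sup>2"
  unfolding quadratic_form_eq[OF x] orthonormal_basis_parseval[OF w x, symmetric] sum_distrib_left
proof (rule sum_mono)
  fix j assume "j \<in> {..<N}"
  then show "\<mu> j * (cmod (braket (w j) x))\<^sup>2 \<le> \<mu> d * (cmod (braket (w j) x))\<^sup>2"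
    using sorted[of d j] orth[of j] d by (cases "j < d") (auto intro: mult_right_mono)
qed

lemma eigenvalue_le_of_orthogonal_bound:
  assumes t: "r \<le> t" "t < N" and h: "\<And>l. l < r \<Longrightarrow> h l \<in> carrier_vec N"
    and bound: "\<And>x. x \<in> carrier_vec N \<Longrightarrow> (\<And>l. l < r \<Longrightarrow> braket (h l) x = 0)
      \<Longrightarrow> Re (braket x (A *\<^sub>v x)) \<le> \<beta> * (vnorm x)\<^sup>2"
  shows "\<mu> t \<le> \<beta>"
proof -
  obtain c where c: "c \<in> carrier_vec (Suc t)" "c \<noteq> 0\<^sub>v (Suc t)"
    and orth: "\<And>l. l < r \<Longrightarrow> braket (h l) (lincomb_vec N {..<Suc t} (\<lambda>k. c $ k) w) = 0"
    using exists_lincomb_vec_orthogonal[of r "Suc t" w N h] t h w_carrier by auto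
  define x where "x = lincomb_vec N {..<Suc t} (\<lambda>k. c $ k) w"
  have x: "x \<in> carrier_vec N"
    by (simp add: x_def)
  have coeff: "braket (w j) x = (if j < Suc t then c $ j else 0)" if "j < N" for j
  proof -
    have "braket (w j) x = (\<Sum>k<Suc t. c $ k * braket (w j) (w k))"
      unfolding x_def using w_carrier t that by (intro braket_lincomb_vec_right) auto
    also have "\<dots> = (\<Sum>k<Suc t. if k = j then c $ k else 0)"
      using orthonormal_basis_braket[OF w] t that by (intro sum.cong refl) auto
    finally show ?thesis
      by simp
  qed
  have "(vnorm x)\<^sup>2 = (\<Sum>k<Suc t. (cmod (c $ k))\<^sup>2)"
    unfolding x_def using t w_carrier orthonormal_basis_braket[OF w]
    by (intro vnorm_lincomb_vec_orthonormal) auto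
  also have "\<dots> = (vnorm c)\<^sup>2"
    by (rule vnorm_square[OF c(1), symmetric])
  finally have "(vnorm x)\<^sup>2 > 0"
    using vnorm_eq_0_iff[OF c(1)] c(2) vnorm_nonneg[of c] by simp
  moreover have "\<mu> t * (vnorm x)\<^sup>2 \<le> Re (braket x (A *\<^sub>v x))"
    using quadratic_form_ge_head[OF x, of "Suc t"] coeff t by simp
  moreover have "Re (braket x (A *\<^sub>v x)) \<le> \<beta> * (vnorm x)\<^sup>2"
    using bound[OF x] orth by (simp add: x_def)
  ultimately show ?thesis
    by (meson mult_le_cancel_right_pos order_trans)
qed

lemma eigenvalue_ge_of_span_bound:
  assumes t: "t < d" "t < N" and g: "\<And>k. k < d \<Longrightarrow> g k \<in> carrier_vec N"
    and bound: "\<And>c. c \<in> carrier_vec d \<Longrightarrow> c \<noteq> 0\<^sub>v d \<Longrightarrow>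
      0 < vnorm (lincomb_vec N {..<d} (\<lambda>k. c $ k) g) \<and>
      \<beta> * (vnorm (lincomb_vec N {..<d} (\<lambda>k. c $ k) g))\<^sup>2
        \<le> Re (braket (lincomb_vec N {..<d} (\<lambda>k. c $ k) g)
                (A *\<^sub>v lincomb_vec N {..<d} (\<lambda>k. c $ k) g))"
  shows "\<beta> \<le> \<mu> t"
proof -
  obtain c where c: "c \<in> carrier_vec d" "c \<noteq> 0\<^sub>v d"
    and orth: "\<And>l. l < t \<Longrightarrow> braket (w l) (lincomb_vec N {..<d} (\<lambda>k. c $ k) g) = 0"
    using exists_lincomb_vec_orthogonal[of t d g N w] t g w_carrier by auto
  define x where "x = lincomb_vec N {..<d} (\<lambda>k. c $ k) g"
  have x: "x \<in> carrier_vec N"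
    by (simp add: x_def)
  have "(vnorm x)\<^sup>2 > 0" and "\<beta> * (vnorm x)\<^sup>2 \<le> Re (braket x (A *\<^sub>v x))"
    using bound[OF c] by (simp_all add: x_def)
  moreover have "Re (braket x (A *\<^sub>v x)) \<le> \<mu> t * (vnorm x)\<^sup>2"
    using quadratic_form_le_tail[OF x t(2)] orth by (simp add: x_def)
  ultimately show ?thesis
    by (meson mult_le_cancel_right_pos order_trans)
qed

theorem ky_fan_partial_sum:
  assumes v: "orthonormal_basis N v" and k: "k \<le> N"
  shows "(\<Sum>l<k. Re (braket (v l) (A *\<^sub>v v l))) \<le> (\<Sum>j<k. \<mu> j)"
proof -
  define y where "y j = (\<Sum>l<k. (cmod (braket (w j) (v l)))\<^sup>2)" for j
  have vc: "\<And>l. l < N \<Longrightarrow> v l \<in> carrier_vec N"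
    using orthonormal_basis_carrier[OF v] .
  have unit: "\<And>l. l < N \<Longrightarrow> vnorm (v l) = 1"
    using vnorm_orthonormal_basis[OF v] .
  have "(\<Sum>l<k. Re (braket (v l) (A *\<^sub>v v l))) = (\<Sum>l<k. \<Sum>j<N. \<mu> j * (cmod (braket (w j) (v l)))\<^sup>2)"
    using k vc by (intro sum.cong refl) (simp add: quadratic_form_eq)
  also have "\<dots> = (\<Sum>j<N. \<mu> j * y j)"
    unfolding y_def sum_distrib_left by (rule sum.swap)
  also have "\<dots> \<le> (\<Sum>j<k. \<mu> j)"
  proof (rule weighted_sum_le_top_sum[OF sorted _ _ _ k])
    show "0 \<le> y j" for j
      by (simp add: y_def sum_nonneg)
    show "y j \<le> 1" if "j < N" for j
    proof -
      have "y j \<le> (\<Sum>l<N. (cmod (braket (v l) (w j)))\<^sup>2)"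
        unfolding y_def using k vc w_carrier[OF that]
        by (auto simp: cmod_braket_commute[of _ N] intro: sum_mono2)
      also have "\<dots> = 1"
        using orthonormal_basis_parseval[OF v w_carrier[OF that]] vnorm_orthonormal_basis[OF w that]
        by simp
      finally show ?thesis .
    qed
    show "(\<Sum>j<N. y j) = real k"
      unfolding y_def using k vc orthonormal_basis_parseval[OF w] unit
      by (subst sum.swap) simp
  qed
  finally show ?thesis .
qed

end

section \<open>Two orthonormal bases\<close>

locale orthonormal_pair =
  fixes N :: nat and E F :: "nat \<Rightarrow> complex vec"
  assumes E: "orthonormal_basis N E" and F: "orthonormal_basis N F"
begin

definition overlap :: "complex mat"
  where "overlap = mat N N (\<lambda>(i, j). braket (E i) (F j))"

definition block_norm :: "nat \<Rightarrow> nat \<Rightarrow> nat \<Rightarrow> real"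
  where "block_norm p q n = op_norm (submatrix overlap {p..<p + q} {0..<n})"

lemma E_carrier: "i < N \<Longrightarrow> E i \<in> carrier_vec N"
  using orthonormal_basis_carrier[OF E] .

lemma F_carrier: "i < N \<Longrightarrow> F i \<in> carrier_vec N"
  using orthonormal_basis_carrier[OF F] .

lemma overlap_block:
  assumes "p + q \<le> N" "n \<le> N"
  shows "submatrix overlap {p..<p + q} {0..<n} \<in> carrier_mat q n"
    and "\<And>k j. k < q \<Longrightarrow> j < n \<Longrightarrow>
      submatrix overlap {p..<p + q} {0..<n} $$ (k, j) = braket (E (p + k)) (F j)"
  using submatrix_atLeastLessThan[of overlap N N p q 0 n] assms by (simp_all add: overlap_def)

lemma block_norm_nonneg: "p + q \<le> N \<Longrightarrow> n \<le> N \<Longrightarrow> 0 \<le> block_norm p q n"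
  unfolding block_norm_def using overlap_block(1) by (rule op_norm_nonneg)

lemma block_norm_le_s_val:
  assumes "p + q \<le> N" "n \<le> N" "q + n = k + 1"
  shows "block_norm p q n \<le> s_val N overlap k"
  unfolding block_norm_def using assms by (intro op_norm_submatrix_le_s_val) auto

lemma cmod_braket_block_le:
  assumes pq: "p + q \<le> N" and n: "n \<le> N"
  shows "cmod (braket (lincomb_vec N {..<q} \<alpha> (\<lambda>k. E (p + k))) (lincomb_vec N {..<n} \<beta> F))
    \<le> block_norm p q n * sqrt (\<Sum>k<q. (cmod (\<alpha> k))\<^sup>2) * sqrt (\<Sum>j<n. (cmod (\<beta> j))\<^sup>2)"
proof -
  have "braket (lincomb_vec N {..<q} \<alpha> (\<lambda>k. E (p + k))) (lincomb_vec N {..<n} \<beta> F)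
      = (\<Sum>k<q. cnj (\<alpha> k) * braket (E (p + k)) (lincomb_vec N {..<n} \<beta> F))"
    using pq E_carrier by (intro braket_lincomb_vec_left) auto
  also have "\<dots> = (\<Sum>k<q. \<Sum>j<n. cnj (\<alpha> k) * submatrix overlap {p..<p + q} {0..<n} $$ (k, j) * \<beta> j)"
  proof (intro sum.cong refl)
    fix k assume k: "k \<in> {..<q}"
    have "braket (E (p + k)) (lincomb_vec N {..<n} \<beta> F) = (\<Sum>j<n. \<beta> j * braket (E (p + k)) (F j))"
      using k pq n E_carrier F_carrier by (intro braket_lincomb_vec_right) auto
    then show "cnj (\<alpha> k) * braket (E (p + k)) (lincomb_vec N {..<n} \<beta> F)
        = (\<Sum>j<n. cnj (\<alpha> k) * submatrix overlap {p..<p + q} {0..<n} $$ (k, j) * \<beta> j)"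
      using k overlap_block(2)[OF pq n] by (simp add: sum_distrib_left mult_ac)
  qed
  finally show ?thesis
    unfolding block_norm_def using cmod_bilinear_le_op_norm[OF overlap_block(1)[OF pq n]] by simp
qed

lemma vnorm_add_block_bounds:
  fixes \<alpha> \<beta> :: "nat \<Rightarrow> complex"
  assumes pq: "p + q \<le> N" and n: "n \<le> N"
  defines "e \<equiv> lincomb_vec N {..<q} \<alpha> (\<lambda>k. E (p + k))" and "f \<equiv> lincomb_vec N {..<n} \<beta> F"
    and "a \<equiv> \<Sum>k<q. (cmod (\<alpha> k))\<^sup>2" and "b \<equiv> \<Sum>j<n. (cmod (\<beta> j))\<^sup>2"
  shows "(1 - block_norm p q n) * (a + b) \<le> (vnorm (e + f))\<^sup>2"
    and "(vnorm (e + f))\<^sup>2 \<le> (1 + block_norm p q n) * (a + b)"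
proof -
  let ?\<sigma> = "block_norm p q n"
  have ef: "e \<in> carrier_vec N" "f \<in> carrier_vec N"
    by (simp_all add: e_def f_def)
  have ab: "0 \<le> a" "0 \<le> b"
    by (simp_all add: a_def b_def sum_nonneg)
  have "(vnorm e)\<^sup>2 = a" "(vnorm f)\<^sup>2 = b"
    unfolding e_def f_def a_def b_def using pq n E_carrier F_carrier
      orthonormal_basis_braket[OF E] orthonormal_basis_braket[OF F]
    by (auto intro!: vnorm_lincomb_vec_orthonormal)
  moreover have "braket (e + f) (e + f) = braket e e + braket f f + (braket e f + cnj (braket e f))"
    using ef by (simp add: braket_add_left[of _ N] braket_add_right[of _ N] cnj_braket)
  ultimately have eq: "(vnorm (e + f))\<^sup>2 = a + b + 2 * Re (braket e f)"
    using braket_self[of _ N] ef by (simp add: complex_eq_iff)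
  have "\<bar>Re (braket e f)\<bar> \<le> ?\<sigma> * sqrt a * sqrt b"
    using abs_Re_le_cmod cmod_braket_block_le[OF pq n] unfolding e_def f_def a_def b_def
    by (rule order_trans)
  also have "\<dots> \<le> ?\<sigma> * ((a + b) / 2)"
    using two_mult_sqrt_le[OF ab] block_norm_nonneg[OF pq n]
    by (simp add: mult.assoc mult_left_mono)
  finally show "(1 - ?\<sigma>) * (a + b) \<le> (vnorm (e + f))\<^sup>2" "(vnorm (e + f))\<^sup>2 \<le> (1 + ?\<sigma>) * (a + b)"
    unfolding eq by (simp_all add: algebra_simps abs_le_iff)
qed

lemma proj_sum_le_of_orthogonal:
  assumes pq: "p + q = m" "m \<le> N" and n: "n \<le> N" and x: "x \<in> carrier_vec N"
    and orth: "\<And>i. i < p \<Longrightarrow> braket (E i) x = 0"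
  shows "proj_norm_sq E m x + proj_norm_sq F n x \<le> (1 + block_norm p q n) * (vnorm x)\<^sup>2"
proof -
  define e where "e = lincomb_vec N {..<q} (\<lambda>k. braket (E (p + k)) x) (\<lambda>k. E (p + k))"
  define f where "f = lincomb_vec N {..<n} (\<lambda>j. braket (F j) x) F"
  define a where "a = proj_norm_sq E m x"
  define b where "b = proj_norm_sq F n x"
  have ab: "0 \<le> a" "0 \<le> b"
    by (simp_all add: a_def b_def proj_norm_sq_nonneg)
  have a_eq: "a = proj_norm_sq (\<lambda>k. E (p + k)) q x"
    using proj_norm_sq_add[of E p q x] orth by (simp add: a_def pq(1)[symmetric] proj_norm_sq_def)
  have eq: "braket x (e + f) = of_real (a + b)"
    using braket_lincomb_vec_coefficients[of q "\<lambda>k. E (p + k)" N x]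
      braket_lincomb_vec_coefficients[of n F N x] E_carrier F_carrier pq n x
    by (simp add: braket_add_right[OF x] e_def f_def a_eq b_def)
  have "cmod (braket x (e + f)) = a + b"
    using ab unfolding eq norm_of_real by simp
  then have "a + b \<le> vnorm x * vnorm (e + f)"
    using cmod_braket_le[OF x, of "e + f"] by (simp add: e_def f_def)
  moreover have "(vnorm (e + f))\<^sup>2 \<le> (1 + block_norm p q n) * (a + b)"
    using vnorm_add_block_bounds(2)[of p q n] pq n
    by (simp add: e_def f_def a_eq b_def proj_norm_sq_def)
  ultimately have "a + b \<le> (1 + block_norm p q n) * (vnorm x)\<^sup>2"
    using le_mult_sq_of_le_mult[of "a + b" "vnorm x" "block_norm p q n" "vnorm (e + f)"]
      ab vnorm_nonneg block_norm_nonneg[of p q n] pq n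
    by simp
  then show ?thesis
    by (simp only: a_def b_def)
qed

lemma proj_sum_ge_on_span:
  fixes \<alpha> \<beta> :: "nat \<Rightarrow> complex"
  assumes pq: "p + q = m" "m \<le> N" and n: "n \<le> N" and \<sigma>: "block_norm p q n < 1"
    and nonzero: "0 < (\<Sum>k<q. (cmod (\<alpha> k))\<^sup>2) + (\<Sum>j<n. (cmod (\<beta> j))\<^sup>2)"
  defines "x \<equiv> lincomb_vec N {..<q} \<alpha> (\<lambda>k. E (p + k)) + lincomb_vec N {..<n} \<beta> F"
  shows "0 < vnorm x"
    and "(1 - block_norm p q n) * (vnorm x)\<^sup>2 \<le> proj_norm_sq E m x + proj_norm_sq F n x"
proof -
  define e where "e = lincomb_vec N {..<q} \<alpha> (\<lambda>k. E (p + k))"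
  define f where "f = lincomb_vec N {..<n} \<beta> F"
  define a where "a = (\<Sum>k<q. (cmod (\<alpha> k))\<^sup>2)"
  define b where "b = (\<Sum>j<n. (cmod (\<beta> j))\<^sup>2)"
  define a' where "a' = proj_norm_sq (\<lambda>k. E (p + k)) q x"
  define b' where "b' = proj_norm_sq F n x"
  have x: "x \<in> carrier_vec N" and xef: "x = e + f"
    by (simp_all add: x_def e_def f_def)
  have ab: "0 \<le> a" "0 \<le> b" "0 \<le> a'" "0 \<le> b'"
    by (simp_all add: a_def b_def a'_def b'_def sum_nonneg proj_norm_sq_nonneg)
  have lower: "(1 - block_norm p q n) * (a + b) \<le> (vnorm x)\<^sup>2"
    using vnorm_add_block_bounds(1)[of p q n \<alpha> \<beta>] pq n by (simp add: x_def a_def b_def)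
  moreover have "0 < (1 - block_norm p q n) * (a + b)"
    using \<sigma> nonzero unfolding a_def b_def by simp
  ultimately show pos: "0 < vnorm x"
    using vnorm_nonneg[of x] by (cases "vnorm x = 0") auto
  have "braket x x = braket x (e + f)"
    using xef by simp
  also have "\<dots> = braket x e + braket x f"
    by (rule braket_add_right[OF x]) (simp_all add: e_def f_def)
  finally have "(vnorm x)\<^sup>2 = Re (braket x e) + Re (braket x f)"
    using arg_cong[OF braket_self[OF x], of Re] by simp
  also have "\<dots> \<le> sqrt a' * sqrt a + sqrt b' * sqrt b"
    using complex_Re_le_cmod[of "braket x e"] complex_Re_le_cmod[of "braket x f"]
      cmod_braket_lincomb_vec_le[OF x, of q "\<lambda>k. E (p + k)" \<alpha>]
      cmod_braket_lincomb_vec_le[OF x, of n F \<beta>] E_carrier F_carrier pq n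
    by (simp add: e_def f_def a_def b_def a'_def b'_def)
  also have "\<dots> \<le> sqrt (a' + b') * sqrt (a + b)"
    using Cauchy_Schwarz_real_two[where a="sqrt a'" and b="sqrt b'" and c="sqrt a" and d="sqrt b"]
      ab
    by simp
  finally have "(1 - block_norm p q n) * (vnorm x)\<^sup>2 \<le> a' + b'"
    using mult_le_of_le_sqrt_mult[of "(vnorm x)\<^sup>2" "block_norm p q n" "a + b"] pos \<sigma> ab lower
    by simp
  then show "(1 - block_norm p q n) * (vnorm x)\<^sup>2 \<le> proj_norm_sq E m x + proj_norm_sq F n x"
    using proj_norm_sq_add[of E p q x] proj_norm_sq_nonneg[of E p x]
    by (simp add: a'_def b'_def pq(1)[symmetric])
qed

lemma block_norm_all_rows_ge_one:
  assumes r: "0 < r" "r \<le> N"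
  shows "1 \<le> block_norm 0 N r"
proof -
  define M where "M = submatrix overlap {0..<0 + N} {0..<r}"
  have M: "M \<in> carrier_mat N r"
    unfolding M_def using overlap_block(1)[of 0 N r] r by simp
  have u: "unit_vec r 0 \<in> carrier_vec r"
    by simp
  have "(M *\<^sub>v unit_vec r 0) $ i = braket (E i) (F 0)" if i: "i < N" for i
  proof -
    have "(M *\<^sub>v unit_vec r 0) $ i = (\<Sum>j<r. if j = 0 then M $$ (i, j) else 0)"
      unfolding mult_mat_vec_eq_sum[OF M u i] by (intro sum.cong refl) auto
    then show ?thesis
      using overlap_block(2)[of 0 N r i 0] i r by (simp add: M_def)
  qed
  then have "(vnorm (M *\<^sub>v unit_vec r 0))\<^sup>2 = (\<Sum>i<N. (cmod (braket (E i) (F 0)))\<^sup>2)"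
    using M by (simp add: vnorm_square[of _ N])
  also have "\<dots> = (vnorm (F 0))\<^sup>2"
    using orthonormal_basis_parseval[OF E F_carrier[of 0]] r by simp
  finally have "(vnorm (M *\<^sub>v unit_vec r 0))\<^sup>2 = (vnorm (F 0))\<^sup>2" .
  then have "vnorm (M *\<^sub>v unit_vec r 0) = 1 \<or> vnorm (M *\<^sub>v unit_vec r 0) = - 1"
    using vnorm_orthonormal_basis[OF F, of 0] r by (simp add: power2_eq_1_iff)
  then have "vnorm (M *\<^sub>v unit_vec r 0) = 1"
    using vnorm_nonneg[of "M *\<^sub>v unit_vec r 0"] by linarith
  then show ?thesis
    using op_norm_mult_vec_le[OF M u] vnorm_unit_vec[OF r(1)] by (simp add: block_norm_def M_def)
qed

lemma s_val_ge_one: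
  assumes "N \<le> k" "k < 2 * N"
  shows "1 \<le> s_val N overlap k"
proof -
  have r: "0 < k + 1 - N" "k + 1 - N \<le> N"
    using assms by auto
  then show ?thesis
    using block_norm_all_rows_ge_one[OF r] block_norm_le_s_val[of 0 N "k + 1 - N" k] assms
    by simp
qed

end

section \<open>The eigenvalues of the sum of two projections\<close>

locale projection_pair_eigenbasis = orthonormal_pair N E F + sorted_eigenbasis N A w \<mu>
  for N E F A w \<mu> +
  fixes m n :: nat
  assumes mn: "n \<le> m" "m \<le> N"
    and A_eq: "A = proj_mat N E m + proj_mat N F n"
begin

lemma quadratic_form_proj_sum:
  assumes x: "x \<in> carrier_vec N"
  shows "Re (braket x (A *\<^sub>v x)) = proj_norm_sq E m x + proj_norm_sq F n x"
proof -
  have "A *\<^sub>v x = proj_mat N E m *\<^sub>v x + proj_mat N F n *\<^sub>v x"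
    unfolding A_eq by (rule add_mult_distrib_mat_vec[of _ N N]) (use x in auto)
  then have "braket x (A *\<^sub>v x) = braket x (proj_mat N E m *\<^sub>v x) + braket x (proj_mat N F n *\<^sub>v x)"
    using braket_add_right[OF x mult_mat_vec_carrier[OF proj_mat_carrier x]
        mult_mat_vec_carrier[OF proj_mat_carrier x]]
    by simp
  then show ?thesis
    using braket_proj_mat[OF _ x, of m E] braket_proj_mat[OF _ x, of n F] E_carrier F_carrier mn
    by simp
qed

lemma eigenvalue_nonneg: "j < N \<Longrightarrow> 0 \<le> \<mu> j"
  using eigenvalue_eq quadratic_form_proj_sum[OF w_carrier] proj_norm_sq_nonneg
  by (metis add_nonneg_nonneg)

lemma sum_eigenvalues: "(\<Sum>j<N. \<mu> j) = real m + real n"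
  using eigenvalue_eq quadratic_form_proj_sum[OF w_carrier] mn
    sum_proj_norm_sq_orthonormal_basis[OF w E, of m]
    sum_proj_norm_sq_orthonormal_basis[OF w F, of n]
  by (simp add: sum.distrib)

lemma eigenvalue_le_one_plus_block_norm:
  assumes j: "j < n"
  shows "\<mu> j \<le> 1 + block_norm j (m - j) n"
  using j mn E_carrier
  by (intro eigenvalue_le_of_orthogonal_bound[of j j E])
    (auto simp: quadratic_form_proj_sum intro!: proj_sum_le_of_orthogonal)

lemma eigenvalue_le_one:
  assumes j: "n \<le> j" "j < N"
  shows "\<mu> j \<le> 1"
proof (rule eigenvalue_le_of_orthogonal_bound[of n j F])
  fix x assume x: "x \<in> carrier_vec N" and orth: "\<And>l. l < n \<Longrightarrow> braket (F l) x = 0"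
  then have "proj_norm_sq F n x = 0"
    by (simp add: proj_norm_sq_def)
  then show "Re (braket x (A *\<^sub>v x)) \<le> 1 * (vnorm x)\<^sup>2"
    using quadratic_form_proj_sum[OF x] proj_norm_sq_le[OF E mn(2) x] by simp
qed (use j mn F_carrier in auto)

lemma eigenvalue_ge_one_minus_block_norm:
  assumes j: "m \<le> j" "j < m + n" "j < N"
  defines "p \<equiv> m + n - 1 - j" and "q \<equiv> j + 1 - n"
  shows "1 - block_norm p q n \<le> \<mu> j"
proof (cases "block_norm p q n < 1")
  case False
  then show ?thesis
    using eigenvalue_nonneg[OF j(3)] by simp
next
  case True
  have pq: "p + q = m" "q + n = j + 1"
    using j mn by (auto simp: p_def q_def)
  define g where "g k = (if k < q then E (p + k) else F (k - q))" for k
  have split: "lincomb_vec N {..<j + 1} (\<lambda>k. c $ k) g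
      = lincomb_vec N {..<q} (\<lambda>k. c $ k) (\<lambda>k. E (p + k)) + lincomb_vec N {..<n} (\<lambda>l. c $ (q + l)) F"
    for c :: "complex vec"
    unfolding pq(2)[symmetric] lincomb_vec_lessThan_add by (simp add: g_def lincomb_vec_def)
  show ?thesis
  proof (rule eigenvalue_ge_of_span_bound[of j "j + 1" g])
    show "g k \<in> carrier_vec N" if "k < j + 1" for k
      using that pq j mn E_carrier F_carrier by (simp add: g_def)
    fix c :: "complex vec" assume c: "c \<in> carrier_vec (j + 1)" "c \<noteq> 0\<^sub>v (j + 1)"
    have "(\<Sum>k<q. (cmod (c $ k))\<^sup>2) + (\<Sum>l<n. (cmod (c $ (q + l)))\<^sup>2) = (vnorm c)\<^sup>2"
      unfolding vnorm_square[OF c(1)] pq(2)[symmetric] sum_lessThan_add ..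
    then have "0 < (\<Sum>k<q. (cmod (c $ k))\<^sup>2) + (\<Sum>l<n. (cmod (c $ (q + l)))\<^sup>2)"
      using c vnorm_eq_0_iff[OF c(1)] vnorm_nonneg[of c] by simp
    then show "0 < vnorm (lincomb_vec N {..<j + 1} (\<lambda>k. c $ k) g) \<and>
        (1 - block_norm p q n) * (vnorm (lincomb_vec N {..<j + 1} (\<lambda>k. c $ k) g))\<^sup>2
          \<le> Re (braket (lincomb_vec N {..<j + 1} (\<lambda>k. c $ k) g)
                  (A *\<^sub>v lincomb_vec N {..<j + 1} (\<lambda>k. c $ k) g))"
      unfolding split
      using proj_sum_ge_on_span[OF pq(1) mn(2) _ True,
          where \<alpha>="\<lambda>k. c $ k" and \<beta>="\<lambda>l. c $ (q + l)"] mn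
      by (simp add: quadratic_form_proj_sum)
  qed (use j in simp_all)
qed

(* majorant j is the coefficient of lam (j + 1) on the right-hand side of the theorem;
   indices are shifted by one against the paper. *)
definition majorant :: "nat \<Rightarrow> real"
  where "majorant j = (if j < n then 1 + s_val N overlap (n + m - (j + 1))
    else if j < m then 1 else if j < m + n then 1 - s_val N overlap j else 0)"

lemma eigenvalue_le_majorant:
  assumes j: "j < m"
  shows "\<mu> j \<le> majorant j"
proof (cases "j < n")
  case True
  have "block_norm j (m - j) n \<le> s_val N overlap (n + m - (j + 1))"
    using j mn by (intro block_norm_le_s_val) auto
  then show ?thesis
    using eigenvalue_le_one_plus_block_norm[OF True] True by (simp add: majorant_def)
next
  case False
  then show ?thesis
    using eigenvalue_le_one[of j] j mn by (simp add: majorant_def)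
qed

lemma majorant_le_eigenvalue:
  assumes j: "m \<le> j" "j < N"
  shows "majorant j \<le> \<mu> j"
proof (cases "j < m + n")
  case True
  have "block_norm (m + n - 1 - j) (j + 1 - n) n \<le> s_val N overlap j"
    using j mn True by (intro block_norm_le_s_val) auto
  then show ?thesis
    using eigenvalue_ge_one_minus_block_norm[OF j(1) True j(2)] j mn True
    by (simp add: majorant_def)
next
  case False
  then show ?thesis
    using eigenvalue_nonneg[OF j(2)] j mn by (simp add: majorant_def)
qed

lemma sum_majorant: "(\<Sum>j<m + n. majorant j) = real m + real n"
proof -
  have "(\<Sum>j<n. majorant j) = (\<Sum>j<n. 1 + s_val N overlap (n + m - (j + 1)))"
    by (intro sum.cong refl) (simp add: majorant_def)
  also have "\<dots> = (\<Sum>j<n. 1 + s_val N overlap (m + j))"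
    using sum.nat_diff_reindex[of "\<lambda>i. 1 + s_val N overlap (m + i)" n]
    by (simp add: add.commute Suc_diff_Suc)
  finally have head: "(\<Sum>j<n. majorant j) = (\<Sum>j<n. 1 + s_val N overlap (m + j))" .
  have "(\<Sum>j<m - n. majorant (n + j)) = (\<Sum>j<m - n. 1)"
    by (intro sum.cong refl) (simp add: majorant_def)
  then have middle: "(\<Sum>j<m - n. majorant (n + j)) = real (m - n)"
    by simp
  have tail: "(\<Sum>j<n. majorant (n + (m - n) + j)) = (\<Sum>j<n. 1 - s_val N overlap (m + j))"
    using mn by (intro sum.cong refl) (simp add: majorant_def)
  have "{..<m + n} = {..<n + ((m - n) + n)}"
    using mn by simp
  then have "(\<Sum>j<m + n. majorant j)
      = (\<Sum>j<n. majorant j) + ((\<Sum>j<m - n. majorant (n + j)) + (\<Sum>j<n. majorant (n + (m - n) + j)))"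
    by (simp only: sum_lessThan_add add.assoc)
  then show ?thesis
    unfolding head middle tail using mn by (simp add: sum.distrib sum_subtractf)
qed

lemma sum_majorant_ge: "real m + real n \<le> (\<Sum>j<N. majorant j)"
proof (cases "m + n \<le> N")
  case True
  then have "{..<N} = {..<(m + n) + (N - (m + n))}"
    by simp
  then have "(\<Sum>j<N. majorant j) = (\<Sum>j<m + n. majorant j) + (\<Sum>j<N - (m + n). majorant (m + n + j))"
    by (simp only: sum_lessThan_add)
  then show ?thesis
    using sum_majorant by (simp add: majorant_def)
next
  case False
  then have "{..<m + n} = {..<N + (m + n - N)}"
    by simp
  then have "(\<Sum>j<m + n. majorant j) = (\<Sum>j<N. majorant j) + (\<Sum>j<m + n - N. majorant (N + j))"
    by (simp only: sum_lessThan_add)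
  moreover have "majorant (N + j) \<le> 0" if "j < m + n - N" for j
    using s_val_ge_one[of "N + j"] that mn by (simp add: majorant_def)
  then have "(\<Sum>j<m + n - N. majorant (N + j)) \<le> 0"
    by (intro sum_nonpos) simp
  ultimately show ?thesis
    using sum_majorant by simp
qed

lemma partial_sum_eigenvalues_le_majorant:
  assumes k: "k \<le> N"
  shows "(\<Sum>j<k. \<mu> j) \<le> (\<Sum>j<k. majorant j)"
proof (cases "k \<le> m")
  case True
  then show ?thesis
    using eigenvalue_le_majorant by (intro sum_mono) auto
next
  case False
  have "{..<N} = {..<k + (N - k)}"
    using k by simp
  then have split: "(\<Sum>j<N. f j) = (\<Sum>j<k. f j) + (\<Sum>j<N - k. f (k + j))" for f :: "nat \<Rightarrow> real"
    by (simp only: sum_lessThan_add)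
  have "(\<Sum>j<N - k. majorant (k + j)) \<le> (\<Sum>j<N - k. \<mu> (k + j))"
    using majorant_le_eigenvalue False k by (intro sum_mono) auto
  then show ?thesis
    using sum_eigenvalues sum_majorant_ge split[of \<mu>] split[of majorant] by simp
qed

lemma majorant_weighted_sum_eq:
  assumes lam_zero: "\<And>j. N < j \<Longrightarrow> lam j = 0"
  shows "(\<Sum>j=1..n. lam j * (1 + s_val N overlap (n + m - j))) + (\<Sum>j=n+1..m. lam j)
      + (\<Sum>j=m+1..m+n. lam j * (1 - s_val N overlap (j - 1)))
    = (\<Sum>l<N. lam (l + 1) * majorant l)"
proof -
  define g where "g l = lam (l + 1) * majorant l" for l
  have "(\<Sum>j=1..n. lam j * (1 + s_val N overlap (n + m - j)))
      = (\<Sum>j<n. lam (j + 1) * (1 + s_val N overlap (n + m - (j + 1))))"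
    using sum_atLeastAtMost_shift[where f="\<lambda>j. lam j * (1 + s_val N overlap (n + m - j))"
        and a=0 and b=n]
    by simp
  also have "\<dots> = (\<Sum>j<n. g j)"
    by (intro sum.cong refl) (simp add: g_def majorant_def)
  finally have head: "(\<Sum>j=1..n. lam j * (1 + s_val N overlap (n + m - j))) = (\<Sum>j<n. g j)" .
  have "(\<Sum>j=n+1..m. lam j) = (\<Sum>j<m - n. lam (n + j + 1))"
    using sum_atLeastAtMost_shift[where f=lam and a=n and b="m - n"] mn by simp
  also have "\<dots> = (\<Sum>j<m - n. g (n + j))"
    by (intro sum.cong refl) (simp add: g_def majorant_def)
  finally have middle: "(\<Sum>j=n+1..m. lam j) = (\<Sum>j<m - n. g (n + j))" .
  have "(\<Sum>j=m+1..m+n. lam j * (1 - s_val N overlap (j - 1)))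
      = (\<Sum>j<n. lam (m + j + 1) * (1 - s_val N overlap (m + j)))"
    using sum_atLeastAtMost_shift[where f="\<lambda>j. lam j * (1 - s_val N overlap (j - 1))"
        and a=m and b=n]
    by simp
  also have "\<dots> = (\<Sum>j<n. g (n + (m - n) + j))"
    using mn by (intro sum.cong refl) (simp add: g_def majorant_def)
  finally have tail:
    "(\<Sum>j=m+1..m+n. lam j * (1 - s_val N overlap (j - 1))) = (\<Sum>j<n. g (n + (m - n) + j))" .
  have "{..<m + n} = {..<n + ((m - n) + n)}"
    using mn by simp
  then have "(\<Sum>j<m + n. g j) = (\<Sum>j<n. g j) + (\<Sum>j<m - n. g (n + j)) + (\<Sum>j<n. g (n + (m - n) + j))"
    by (simp only: sum_lessThan_add add.assoc)
  also have "(\<Sum>j<m + n. g j) = (\<Sum>j<N. g j)"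
    by (rule sum.mono_neutral_cong) (auto simp: g_def majorant_def lam_zero)
  finally show ?thesis
    unfolding head middle tail g_def by simp
qed

lemma sum_expectations_eq_weighted_diagonal:
  assumes v: "orthonormal_basis N v" and M: "M \<in> carrier_mat N N"
    and eigen: "\<And>l. l < N \<Longrightarrow> M *\<^sub>v v l = complex_of_real (c l) \<cdot>\<^sub>v v l"
  shows "(\<Sum>i<m. Re (braket (E i) (M *\<^sub>v E i))) + (\<Sum>i<n. Re (braket (F i) (M *\<^sub>v F i)))
    = (\<Sum>l<N. c l * Re (braket (v l) (A *\<^sub>v v l)))"
  using sum_expectations_eigenbasis[OF v M eigen, of m E]
    sum_expectations_eigenbasis[OF v M eigen, of n F]
    E_carrier F_carrier mn quadratic_form_proj_sum[OF orthonormal_basis_carrier[OF v]]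
  by (simp add: sum.distrib algebra_simps)

lemma weighted_diagonal_le_majorant:
  assumes v: "orthonormal_basis N v"
    and c: "\<And>i j. i \<le> j \<Longrightarrow> j < N \<Longrightarrow> c j \<le> c i" "\<And>j. j < N \<Longrightarrow> 0 \<le> c j"
  shows "(\<Sum>l<N. c l * Re (braket (v l) (A *\<^sub>v v l))) \<le> (\<Sum>l<N. c l * majorant l)"
proof -
  have "(\<Sum>l<k. Re (braket (v l) (A *\<^sub>v v l))) \<le> (\<Sum>l<k. majorant l)" if "k \<le> N" for k
    using ky_fan_partial_sum[OF v that] partial_sum_eigenvalues_le_majorant[OF that] by linarith
  then have "0 \<le> (\<Sum>l<N. c l * (majorant l - Re (braket (v l) (A *\<^sub>v v l))))"
    using c by (intro weighted_sum_nonneg_of_partial_sums) (auto simp: sum_subtractf)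
  then show ?thesis
    by (simp add: sum_subtractf algebra_simps)
qed

end

section \<open>Density matrices\<close>

lemma density_mat_eigenbasis:
  assumes rho: "density_mat N \<rho>"
    and eig: "char_poly \<rho> = (\<Prod>j=1..N. [:- complex_of_real (lam j), 1:])"
  obtains v where "orthonormal_basis N v"
    "\<And>l. l < N \<Longrightarrow> \<rho> *\<^sub>v v l = complex_of_real (lam (l + 1)) \<cdot>\<^sub>v v l"
    "\<And>l. l < N \<Longrightarrow> 0 \<le> lam (l + 1)"
proof -
  have \<rho>: "\<rho> \<in> carrier_mat N N" "hermitian_mat \<rho>"
    and psd: "\<And>x. x \<in> carrier_vec N \<Longrightarrow> 0 \<le> Re (braket x (\<rho> *\<^sub>v x))"
    using rho unfolding density_mat_def by auto
  have "char_poly \<rho> = (\<Prod>c\<leftarrow>map (\<lambda>j. complex_of_real (lam (j + 1))) [0..<N]. [:- c, 1:])"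
    unfolding eig prod_atLeast1_atMost_eq_prod_list by (simp add: comp_def)
  then obtain v where v: "orthonormal_basis N v"
    and eigen: "\<And>l. l < N \<Longrightarrow> \<rho> *\<^sub>v v l = complex_of_real (lam (l + 1)) \<cdot>\<^sub>v v l"
    using hermitian_eigenbasis_exists[OF \<rho>] by fastforce
  have "0 \<le> lam (l + 1)" if l: "l < N" for l
  proof -
    have "Re (braket (v l) (\<rho> *\<^sub>v v l)) = lam (l + 1)"
      using braket_smult_right[of "v l" N "v l"] orthonormal_basis_carrier[OF v l]
        orthonormal_basis_braket[OF v l l] eigen[OF l]
      by simp
    then show ?thesis
      using psd[OF orthonormal_basis_carrier[OF v l]] by simp
  qed
  then show ?thesis
    using that[OF v eigen] by blast
qed

theorem proposition1:
  fixes N m n :: nat and \<rho> :: "complex mat" and lam :: "nat \<Rightarrow> real"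
    and e a :: "nat \<Rightarrow> complex vec" and U :: "complex mat"
    and p q :: "nat \<Rightarrow> real"
  assumes rho: "density_mat N \<rho>"
    and eig: "char_poly \<rho> = (\<Prod>j=1..N. [:- complex_of_real (lam j), 1:])"
    and sorted: "\<And>i j. 1 \<le> i \<Longrightarrow> i \<le> j \<Longrightarrow> j \<le> N \<Longrightarrow> lam j \<le> lam i"
    and lam_zero: "\<And>j. j > N \<Longrightarrow> lam j = 0"
    and e: "orthonormal_basis N (\<lambda>i. e (i + 1))"
    and a: "orthonormal_basis N (\<lambda>i. a (i + 1))"
    and U_def: "U = mat N N (\<lambda>(i, j). braket (e (i + 1)) (a (j + 1)))"
    and p_def: "\<And>i. p i = Re (braket (e i) (\<rho> *\<^sub>v e i))"
    and q_def: "\<And>i. q i = Re (braket (a i) (\<rho> *\<^sub>v a i))"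
    and mn: "1 \<le> n" "n \<le> m" "m \<le> N"
  shows "(\<Sum>i=1..m. p i) + (\<Sum>i=1..n. q i)
     \<le> (\<Sum>j=1..n. lam j * (1 + s_val N U (n + m - j)))
       + (\<Sum>j=n+1..m. lam j)
       + (\<Sum>j=m+1..m+n. lam j * (1 - s_val N U (j - 1)))"
proof -
  note lam_sorted = sorted \<comment> \<open>the locale interpreted below has a fact of the same name\<close>
  define E F where "E i = e (i + 1)" and "F j = a (j + 1)" for i j
  interpret orthonormal_pair N E F
    using e a by unfold_locales (simp_all add: E_def F_def orthonormal_basis_def)
  obtain v where v: "orthonormal_basis N v"
    and v_eigen: "\<And>l. l < N \<Longrightarrow> \<rho> *\<^sub>v v l = complex_of_real (lam (l + 1)) \<cdot>\<^sub>v v l"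
    and lam_nonneg: "\<And>l. l < N \<Longrightarrow> 0 \<le> lam (l + 1)"
    using density_mat_eigenbasis[OF rho eig] by blast
  define A where "A = proj_mat N E m + proj_mat N F n"
  have A: "A \<in> carrier_mat N N" "hermitian_mat A"
    by (simp_all add: A_def hermitian_proj_mat_add)
  obtain w \<mu> where "orthonormal_basis N w" "\<And>i. i < N \<Longrightarrow> A *\<^sub>v w i = complex_of_real (\<mu> i) \<cdot>\<^sub>v w i"
    "\<And>i j. i \<le> j \<Longrightarrow> j < N \<Longrightarrow> \<mu> j \<le> \<mu> i"
    using hermitian_sorted_eigenbasis[OF A] by blast
  then interpret projection_pair_eigenbasis N E F A w \<mu> m n
    using A mn by unfold_locales (simp_all add: A_def)
  have "(\<Sum>i=1..m. p i) + (\<Sum>i=1..n. q i) = (\<Sum>l<N. lam (l + 1) * Re (braket (v l) (A *\<^sub>v v l)))"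
    using sum_expectations_eq_weighted_diagonal[OF v _ v_eigen] rho
    by (simp add: p_def q_def E_def F_def sum.atLeast1_atMost_eq density_mat_def)
  also have "\<dots> \<le> (\<Sum>l<N. lam (l + 1) * majorant l)"
    using lam_nonneg by (intro weighted_diagonal_le_majorant[OF v]) (auto intro: lam_sorted)
  also have "\<dots> = (\<Sum>j=1..n. lam j * (1 + s_val N U (n + m - j))) + (\<Sum>j=n+1..m. lam j)
      + (\<Sum>j=m+1..m+n. lam j * (1 - s_val N U (j - 1)))"
    using majorant_weighted_sum_eq[OF lam_zero] by (simp add: U_def overlap_def E_def F_def)
  finally show ?thesis .
qed

end
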